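(* Let $\Theta\subseteq\mathbb R^d$, $h:\Theta\to\mathbb R^d$ measurable, $\theta_\star\in\Theta$ such that $h$ is twice continuously differentiable in a neighborhood of $\theta_\star$ and $\nabla h(\theta_\star)$ is a Hurwitz matrix, with $-L$ ($L>0$) the largest real part of its eigenvalues. Let $U_\star$ be a positive definite $d\times d$ matrix and $\{\gamma_n\}_{n\ge1}$ a positive sequence with $\sum_k\gamma_k=\infty$, $\sum_k\gamma_k^2<\infty$. Let $\{v_n\}$ be a sequence of $d\times d$ matrices. (a) Suppose $\log(\gamma_{k-1}/\gamma_k)=o(\gamma_k)$ and $$v_{n+1}=v_n+\gamma_nf(v_n)+\frac{\gamma_n-\gamma_{n+1}}{\gamma_{n+1}}v_n+(\gamma_{n+1}-\gamma_n)U_\star+\gamma_n\gamma_{n+1}\nabla h(\theta_\star)v_n\nabla h(\theta_\star)^T,$$ where $f(v)=U_\star+\nabla h(\theta_\star)v+v\nabla h(\theta_\star)^T$. Then there exists a unique positive definite matrix $V$ with $f(V)=0$, and $\lim_nv_n=V$. (b) Suppose there is $\gamma_\star>1/(2L)$ with $\log(\gamma_{k-1}/\gamma_k)\sim\gamma_k/\gamma_\star$, and $$v_{n+1}=v_n+\gamma_nf(v_n)+(\gamma_{n+1}-\gamma_n)U_\star+\gamma_n\gamma_{n+1}\nabla h(\theta_\star)v_n\nabla h(\theta_\star)^T,$$ where $f(v)=U_\star+\nabla h(\theta_\star)v+v\nabla h(\theta_\star)^T+\gamma_\star^{-1}v$. Then there exists a unique positive definite matrix $V$ with $f(V)=0$,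 and $\lim_nv_n=V$.
   Context: A Hurwitz matrix is a square matrix all of whose eigenvalues have negative real part; $x^T$ denotes transpose. *)

theory Defs
  imports "HOL-Analysis.Analysis" "HOL-Library.Landau_Symbols"
begin

definition cmat :: "real^'n^'n \<Rightarrow> complex^'n^'n" where
  "cmat A = (\<chi> i j. complex_of_real (A $ i $ j))"

definition is_eigenvalue :: "real^'n^'n \<Rightarrow> complex \<Rightarrow> bool" where
  "is_eigenvalue A \<mu> \<longleftrightarrow> (\<exists>v. v \<noteq> 0 \<and> cmat A *v v = \<mu> *s v)"

definition hurwitz :: "real^'n^'n \<Rightarrow> bool" where
  "hurwitz A \<longleftrightarrow> (\<forall>\<mu>. is_eigenvalue A \<mu> \<longrightarrow> Re \<mu> < 0)"

definition pos_def :: "real^'n^'n \<Rightarrow> bool" where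
  "pos_def M \<longleftrightarrow> transpose M = M \<and> (\<forall>x. x \<noteq> 0 \<longrightarrow> x \<bullet> (M *v x) > 0)"

definition C2_with_jacobian ::
    "(real^'n) set \<Rightarrow> (real^'n \<Rightarrow> real^'n) \<Rightarrow> (real^'n \<Rightarrow> real^'n^'n) \<Rightarrow> bool" where
  "C2_with_jacobian U h J \<longleftrightarrow>
     (\<forall>x\<in>U. (h has_derivative (\<lambda>v. J x *v v)) (at x)) \<and>
     (\<exists>J'. (\<forall>x\<in>U. (J has_derivative blinfun_apply (J' x)) (at x)) \<and> continuous_on U J')"

end

theory Submission
  imports Defs "Jordan_Normal_Form.Schur_Decomposition"
begin

text \<open>
  Write \<open>L W = A W + W A\<^sup>T + c W\<close>. If every eigenvalue of \<open>A\<close> has real part below \<open>-c/2\<close>,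
  a rescaled Schur form of \<open>A\<close> shows that \<open>L\<close> is strictly dissipative for a suitable inner
  product on matrices: \<open>\<langle>W, L W\<rangle> \<le> -r \<parallel>W\<parallel>\<^sup>2\<close>. Hence \<open>L\<close> is invertible, the Lyapunov
  equation \<open>U + L V = 0\<close> has exactly one solution, this solution is symmetric, and it is positive
  definite because \<open>y \<mapsto> y\<^sup>T V y\<close> strictly decreases along the explicit Euler scheme for
  \<open>y' = (A\<^sup>T + c/2) y\<close>, whose orbits tend to \<open>0\<close>.

  The error \<open>e\<^sub>n = v\<^sub>n - V\<close> obeys \<open>e\<^sub>n\<^sub>+\<^sub>1 = e\<^sub>n + \<gamma>\<^sub>n L e\<^sub>n + \<gamma>\<^sub>n o(\<parallel>e\<^sub>n\<parallel> + 1)\<close>. In the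
  dissipative norm the Euler step contracts by \<open>1 - \<rho> \<gamma>\<^sub>n\<close>, and \<open>\<Sum> \<gamma>\<^sub>n = \<infinity>\<close> forces \<open>e\<^sub>n \<rightarrow> 0\<close>.
  Part (a) is the case \<open>c = 0\<close>: the drift \<open>(\<gamma>\<^sub>n - \<gamma>\<^sub>n\<^sub>+\<^sub>1) / \<gamma>\<^sub>n\<^sub>+\<^sub>1 \<cdot> v\<^sub>n\<close> is \<open>o(\<gamma>\<^sub>n)\<close> because
  \<open>log (\<gamma>\<^sub>n\<^sub>-\<^sub>1 / \<gamma>\<^sub>n) = o(\<gamma>\<^sub>n)\<close>. In part (b) the term \<open>v / \<gamma>\<^sub>*\<close> is absorbed into \<open>L\<close> with
  \<open>c = 1 / \<gamma>\<^sub>* < 2 L\<close>.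
\<close>

section \<open>Scalar recursions with non-summable step sizes\<close>

lemma summable_if_decrements_bounded:
  fixes w g :: "nat \<Rightarrow> real"
  assumes g_nonneg: "\<And>k. g k \<ge> 0" and w_nonneg: "\<And>k. w k \<ge> 0"
    and decrement: "\<And>k. w (Suc k) \<le> w k - g k"
  shows "summable g"
proof (rule summableI_nonneg_bounded[OF g_nonneg])
  fix k
  have "(\<Sum>i<k. g i) \<le> w 0 - w k"
  proof (induction k)
    case (Suc k)
    then show ?case
      using decrement[of k] by simp
  qed simp
  then show "(\<Sum>i<k. g i) \<le> w 0"
    using w_nonneg[of k] by simp
qed

lemma nonneg_contraction_tendsto_zero:
  fixes z \<gamma> :: "nat \<Rightarrow> real"
  assumes z_nonneg: "\<And>n. z n \<ge> 0" and \<gamma>_nonneg: "\<And>n. n \<ge> N \<Longrightarrow> \<gamma> n \<ge> 0"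
    and \<gamma>_div: "\<not> summable \<gamma>" and r: "r > 0"
    and step: "\<And>n. n \<ge> N \<Longrightarrow> z (Suc n) \<le> (1 - r * \<gamma> n) * z n"
  shows "z \<longlonglongrightarrow> 0"
proof -
  define w where "w k = z (k + N)" for k
  have decrement: "w (Suc k) \<le> w k - r * (\<gamma> (k + N) * w k)" for k
    using step[of "k + N"] by (simp add: w_def algebra_simps)
  have \<gamma>w_nonneg: "\<gamma> (k + N) * w k \<ge> 0" for k
    using \<gamma>_nonneg[of "k + N"] z_nonneg by (simp add: w_def)
  have "decseq w"
    using decrement \<gamma>w_nonneg r by (intro decseq_SucI) (smt (verit) mult_nonneg_nonneg)
  then obtain l where w_lim: "w \<longlonglongrightarrow> l" and l_le: "\<forall>k. l \<le> w k"
    using decseq_convergent[of w 0] z_nonneg unfolding w_def by metis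
  have "summable (\<lambda>k. r * (\<gamma> (k + N) * w k))"
    using decrement \<gamma>w_nonneg r z_nonneg
    by (intro summable_if_decrements_bounded[where w = w]) (auto simp: w_def)
  then have \<gamma>w_summable: "summable (\<lambda>k. \<gamma> (k + N) * w k)"
    using r by (simp add: summable_cmult_iff)
  have "l = 0"
  proof (rule ccontr)
    assume "l \<noteq> 0"
    moreover have "l \<ge> 0"
      using LIMSEQ_le_const[OF w_lim] z_nonneg by (simp add: w_def)
    ultimately have "l > 0"
      by simp
    have "summable (\<lambda>k. \<gamma> (k + N))"
    proof (rule summable_comparison_test'[OF summable_divide[OF \<gamma>w_summable, of l]])
      fix k
      have "\<gamma> (k + N) * l \<le> \<gamma> (k + N) * w k"
        using l_le \<gamma>_nonneg[of "k + N"] by (intro mult_left_mono) auto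
      then show "norm (\<gamma> (k + N)) \<le> \<gamma> (k + N) * w k / l"
        using \<open>l > 0\<close> \<gamma>_nonneg[of "k + N"] by (simp add: field_simps)
    qed
    with \<gamma>_div show False
      by simp
  qed
  with w_lim show ?thesis
    unfolding w_def by (simp add: LIMSEQ_offset)
qed

lemma positive_part_step_bound:
  fixes x x' \<gamma> \<eta> s \<epsilon> \<rho> :: real
  assumes "x \<ge> 0" "\<gamma> \<ge> 0" "\<rho> * \<gamma> \<le> 2" and \<eta>: "\<eta> \<le> \<rho> / 2" and s: "s \<le> \<rho> / 2 * \<epsilon>"
    and x': "x' \<le> (1 - \<rho> * \<gamma> + \<gamma> * \<eta>) * x + \<gamma> * s"
  shows "max (x' - \<epsilon>) 0 \<le> (1 - \<rho> / 2 * \<gamma>) * max (x - \<epsilon>) 0"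
proof -
  have factor_nonneg: "1 - \<rho> / 2 * \<gamma> \<ge> 0"
    using assms by simp
  have "\<gamma> * \<eta> \<le> \<gamma> * (\<rho> / 2)" and "\<gamma> * s \<le> \<gamma> * (\<rho> / 2 * \<epsilon>)"
    using mult_left_mono[OF \<eta> \<open>\<gamma> \<ge> 0\<close>] mult_left_mono[OF s \<open>\<gamma> \<ge> 0\<close>] by auto
  then have "(1 - \<rho> * \<gamma> + \<gamma> * \<eta>) * x \<le> (1 - \<rho> / 2 * \<gamma>) * x"
    using \<open>x \<ge> 0\<close> by (intro mult_right_mono) (auto simp: algebra_simps)
  then have "x' \<le> (1 - \<rho> / 2 * \<gamma>) * x + \<gamma> * (\<rho> / 2 * \<epsilon>)"
    using x' \<open>\<gamma> * s \<le> _\<close> by linarith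
  moreover have "(1 - \<rho> / 2 * \<gamma>) * (x - \<epsilon>) = (1 - \<rho> / 2 * \<gamma>) * x + \<gamma> * (\<rho> / 2 * \<epsilon>) - \<epsilon>"
    by (simp add: field_simps)
  ultimately have "x' - \<epsilon> \<le> (1 - \<rho> / 2 * \<gamma>) * (x - \<epsilon>)"
    by linarith
  also have "\<dots> \<le> (1 - \<rho> / 2 * \<gamma>) * max (x - \<epsilon>) 0"
    using factor_nonneg by (intro mult_left_mono) auto
  finally show ?thesis
    using factor_nonneg by simp
qed

lemma perturbed_contraction_tendsto_zero:
  fixes x \<gamma> \<eta> s :: "nat \<Rightarrow> real"
  assumes x_nonneg: "\<And>n. x n \<ge> 0" and \<gamma>_div: "\<not> summable \<gamma>" and \<gamma>_lim: "\<gamma> \<longlonglongrightarrow> 0"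
    and \<eta>_lim: "\<eta> \<longlonglongrightarrow> 0" and s_lim: "s \<longlonglongrightarrow> 0" and \<rho>: "\<rho> > 0"
    and step: "eventually (\<lambda>n. \<gamma> n \<ge> 0 \<and>
                 x (Suc n) \<le> (1 - \<rho> * \<gamma> n + \<gamma> n * \<eta> n) * x n + \<gamma> n * s n) sequentially"
  shows "x \<longlonglongrightarrow> 0"
proof (rule LIMSEQ_I)
  fix e :: real
  assume "e > 0"
  define \<epsilon> where "\<epsilon> = e / 2"
  have "\<epsilon> > 0" "\<rho> / 2 > 0" "2 / \<rho> > 0"
    using \<open>e > 0\<close> \<rho> by (auto simp: \<epsilon>_def)
  obtain N where N: "\<And>n. n \<ge> N \<Longrightarrow> (\<gamma> n \<ge> 0 \<and>
      x (Suc n) \<le> (1 - \<rho> * \<gamma> n + \<gamma> n * \<eta> n) * x n + \<gamma> n * s n) \<and>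
      \<eta> n < \<rho> / 2 \<and> s n < \<rho> / 2 * \<epsilon> \<and> \<gamma> n < 2 / \<rho>"
    using eventually_conj[OF step eventually_conj[OF order_tendstoD(2)[OF \<eta>_lim \<open>\<rho> / 2 > 0\<close>]
        eventually_conj[OF order_tendstoD(2)[OF s_lim mult_pos_pos[OF \<open>\<rho> / 2 > 0\<close> \<open>\<epsilon> > 0\<close>]]
          order_tendstoD(2)[OF \<gamma>_lim \<open>2 / \<rho> > 0\<close>]]]]
    unfolding eventually_sequentially by blast
  define z where "z n = max (x n - \<epsilon>) 0" for n
  have "z \<longlonglongrightarrow> 0"
  proof (rule nonneg_contraction_tendsto_zero[where N = N and r = "\<rho> / 2"])
    show "z (Suc n) \<le> (1 - \<rho> / 2 * \<gamma> n) * z n" if "n \<ge> N" for n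
      using N[OF that] x_nonneg \<rho> unfolding z_def
      by (intro positive_part_step_bound[of "x n" "\<gamma> n" \<rho> "\<eta> n" "s n"]) (auto simp: field_simps)
  qed (use N \<gamma>_div \<rho> in \<open>auto simp: z_def\<close>)
  then obtain M where M: "\<And>n. n \<ge> M \<Longrightarrow> z n < \<epsilon>"
    using \<open>\<epsilon> > 0\<close> by (metis LIMSEQ_D diff_zero real_norm_def abs_less_iff)
  have "norm (x n - 0) < e" if "n \<ge> M" for n
  proof -
    have "x n - \<epsilon> < \<epsilon>"
      using M[OF that] by (simp add: z_def)
    then show ?thesis
      using x_nonneg[of n] by (simp add: \<epsilon>_def)
  qed
  then show "\<exists>M. \<forall>n\<ge>M. norm (x n - 0) < e"
    by blast
qed

section \<open>Strictly dissipative linear maps\<close>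

text \<open>The linear map \<open>L\<close> is strictly dissipative for the inner product \<open>\<langle>x, y\<rangle> = \<Phi> x \<bullet> \<Phi> y\<close>.\<close>

definition strictly_dissipative :: "('a::real_vector \<Rightarrow> 'b::real_inner) \<Rightarrow> real \<Rightarrow> ('a \<Rightarrow> 'a) \<Rightarrow> bool" where
  "strictly_dissipative \<Phi> r L \<longleftrightarrow>
     linear \<Phi> \<and> inj \<Phi> \<and> r > 0 \<and> (\<forall>x. \<Phi> x \<bullet> \<Phi> (L x) \<le> - r * (norm (\<Phi> x))\<^sup>2)"

lemma strictly_dissipative_inj:
  assumes diss: "strictly_dissipative \<Phi> r L" and "linear L"
  shows "inj L"
  unfolding linear_injective_0[OF \<open>linear L\<close>]
proof (intro allI impI)
  fix x
  assume "L x = 0"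
  with diss have "0 \<le> - r * (norm (\<Phi> x))\<^sup>2"
    unfolding strictly_dissipative_def by (metis inner_zero_right linear_0)
  with diss have "\<Phi> x = 0"
    unfolding strictly_dissipative_def by (simp add: mult_le_0_iff)
  with diss show "x = 0"
    unfolding strictly_dissipative_def by (meson linear_injective_0)
qed

lemma linear_bounded_relative:
  fixes \<Phi> :: "'a::euclidean_space \<Rightarrow> 'b::euclidean_space"
  assumes "linear \<Phi>" "inj \<Phi>" "linear L"
  obtains K where "K \<ge> 0" "\<And>x. norm (\<Phi> (L x)) \<le> K * norm (\<Phi> x)"
proof -
  obtain m where m: "m > 0" "\<And>x. m * norm x \<le> norm (\<Phi> x)"
    using linear_inj_bounded_below_pos[OF assms(1,2)] by blast
  obtain B\<Phi> where B\<Phi>: "B\<Phi> > 0" "\<And>x. norm (\<Phi> x) \<le> B\<Phi> * norm x"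
    using linear_bounded_pos[OF assms(1)] by blast
  obtain BL where BL: "BL > 0" "\<And>x. norm (L x) \<le> BL * norm x"
    using linear_bounded_pos[OF assms(3)] by blast
  show thesis
  proof (rule that)
    show "B\<Phi> * BL / m \<ge> 0"
      using m B\<Phi> BL by simp
    fix x
    have "norm (\<Phi> (L x)) \<le> B\<Phi> * (BL * norm x)"
      using B\<Phi> BL(2)[of x] by (meson mult_left_mono less_imp_le order_trans)
    also have "\<dots> \<le> B\<Phi> * (BL * (norm (\<Phi> x) / m))"
      using m B\<Phi>(1) BL(1) by (intro mult_left_mono) (auto simp: field_simps mult.commute)
    finally show "norm (\<Phi> (L x)) \<le> B\<Phi> * BL / m * norm (\<Phi> x)"
      by simp
  qed
qed

lemma norm_linear_euler_step_power2:
  assumes "linear \<Phi>"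
  shows "(norm (\<Phi> (x + t *\<^sub>R L x)))\<^sup>2
    = (norm (\<Phi> x))\<^sup>2 + 2 * t * (\<Phi> x \<bullet> \<Phi> (L x)) + t\<^sup>2 * (norm (\<Phi> (L x)))\<^sup>2"
  using assms unfolding power2_norm_eq_inner
  by (simp add: linear_add linear_scale inner_add_left inner_add_right inner_commute
      power2_eq_square algebra_simps)

lemma strictly_dissipative_euler_contraction:
  fixes \<Phi> :: "'a::euclidean_space \<Rightarrow> 'b::euclidean_space"
  assumes diss: "strictly_dissipative \<Phi> r L" and "linear L"
  obtains t0 \<rho> where "t0 > 0" "\<rho> > 0" "\<rho> * t0 \<le> 1"
    "\<And>t x. 0 < t \<Longrightarrow> t \<le> t0 \<Longrightarrow> norm (\<Phi> (x + t *\<^sub>R L x)) \<le> (1 - \<rho> * t) * norm (\<Phi> x)"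
proof -
  have "linear \<Phi>" and r: "r > 0" and neg: "\<And>x. \<Phi> x \<bullet> \<Phi> (L x) \<le> - r * (norm (\<Phi> x))\<^sup>2"
    using diss unfolding strictly_dissipative_def by auto
  obtain K where K: "\<And>x. norm (\<Phi> (L x)) \<le> K * norm (\<Phi> x)"
    using linear_bounded_relative[of \<Phi> L] diss \<open>linear L\<close> unfolding strictly_dissipative_def by blast
  have "K\<^sup>2 + 1 > 0"
    by (simp add: add_nonneg_pos)
  define t0 where "t0 = min (r / (K\<^sup>2 + 1)) (1 / r)"
  show thesis
  proof
    show "t0 > 0" and "r / 2 > 0"
      using r \<open>K\<^sup>2 + 1 > 0\<close> by (auto simp: t0_def)
    have "r * t0 \<le> r * (1 / r)"
      using r by (intro mult_left_mono) (auto simp: t0_def)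
    then show "r / 2 * t0 \<le> 1"
      using r by simp
    fix t x
    assume t: "0 < t" "t \<le> t0"
    define N where "N = norm (\<Phi> x)"
    have "t * K\<^sup>2 \<le> r / (K\<^sup>2 + 1) * K\<^sup>2"
      using t by (intro mult_right_mono) (auto simp: t0_def)
    also have "\<dots> \<le> r"
      using r by (simp add: field_simps add_pos_nonneg)
    finally have "t * K\<^sup>2 \<le> r" .
    have "(norm (\<Phi> (x + t *\<^sub>R L x)))\<^sup>2 \<le> N\<^sup>2 + 2 * t * (- r * N\<^sup>2) + t\<^sup>2 * (K * N)\<^sup>2"
      unfolding norm_linear_euler_step_power2[OF \<open>linear \<Phi>\<close>] N_def
      using neg[of x] K[of x] t by (intro add_mono mult_left_mono power_mono) auto
    also have "\<dots> = N\<^sup>2 * (1 - 2 * r * t + t * (t * K\<^sup>2))"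
      by (simp add: power2_eq_square algebra_simps)
    also have "\<dots> \<le> N\<^sup>2 * (1 - 2 * r * t + t * r)"
      using \<open>t * K\<^sup>2 \<le> r\<close> t by (intro mult_left_mono add_left_mono) auto
    also have "\<dots> \<le> N\<^sup>2 * (1 - r / 2 * t)\<^sup>2"
      using r t by (intro mult_left_mono) (auto simp: power2_eq_square algebra_simps)
    also have "\<dots> = ((1 - r / 2 * t) * N)\<^sup>2"
      by (simp add: power_mult_distrib)
    finally have "(norm (\<Phi> (x + t *\<^sub>R L x)))\<^sup>2 \<le> ((1 - r / 2 * t) * N)\<^sup>2" .
    moreover have "r / 2 * t \<le> 1"
      using t r by (auto simp: t0_def field_simps)
    then have "(1 - r / 2 * t) * N \<ge> 0"
      by (simp add: N_def)
    ultimately show "norm (\<Phi> (x + t *\<^sub>R L x)) \<le> (1 - r / 2 * t) * norm (\<Phi> x)"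
      unfolding N_def by (meson power2_le_imp_le)
  qed
qed

lemma contraction_iterates_tendsto_zero:
  fixes \<Phi> :: "'a::real_normed_vector \<Rightarrow> 'b::euclidean_space"
  assumes "linear \<Phi>" "inj \<Phi>" and \<theta>: "0 \<le> \<theta>" "\<theta> < 1"
    and contr: "\<And>x. norm (\<Phi> (F x)) \<le> \<theta> * norm (\<Phi> x)"
  shows "(\<lambda>k. (F ^^ k) y) \<longlonglongrightarrow> 0"
proof -
  obtain m where m: "m > 0" "\<And>x. m * norm x \<le> norm (\<Phi> x)"
    using linear_inj_bounded_below_pos[OF assms(1,2)] by blast
  have iter: "norm (\<Phi> ((F ^^ k) y)) \<le> \<theta> ^ k * norm (\<Phi> y)" for k
  proof (induction k)
    case (Suc k)
    then show ?case
      using contr[of "(F ^^ k) y"] \<theta> by (simp add: order_trans mult_left_mono mult.assoc)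
  qed simp
  show ?thesis
  proof (rule Lim_null_comparison)
    show "eventually (\<lambda>k. norm ((F ^^ k) y) \<le> \<theta> ^ k * (norm (\<Phi> y) / m)) sequentially"
      using m iter order_trans by (intro always_eventually allI) (simp add: field_simps, blast)
    show "(\<lambda>k. \<theta> ^ k * (norm (\<Phi> y) / m)) \<longlonglongrightarrow> 0"
      using \<theta> by (intro tendsto_mult_left_zero LIMSEQ_power_zero) simp
  qed
qed

lemma norm_perturbed_euler_step:
  fixes \<Phi> :: "'a::real_normed_vector \<Rightarrow> 'b::real_normed_vector"
  assumes "linear \<Phi>" and m: "m > 0" "\<And>x. m * norm x \<le> norm (\<Phi> x)"
    and B: "B \<ge> 0" "\<And>x. norm (\<Phi> x) \<le> B * norm x"
    and contr: "norm (\<Phi> (e + \<gamma> *\<^sub>R L e)) \<le> (1 - \<rho> * \<gamma>) * norm (\<Phi> e)"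
    and "\<gamma> \<ge> 0" "\<eta> \<ge> 0" and P: "norm (e' - (e + \<gamma> *\<^sub>R L e)) \<le> \<gamma> * (\<eta> * norm e + s)"
  shows "norm (\<Phi> e') \<le> (1 - \<rho> * \<gamma> + \<gamma> * (B * \<eta> / m)) * norm (\<Phi> e) + \<gamma> * (B * s)"
proof -
  define P where "P = e' - (e + \<gamma> *\<^sub>R L e)"
  have "norm (\<Phi> e') = norm (\<Phi> (e + \<gamma> *\<^sub>R L e) + \<Phi> P)"
    unfolding P_def by (simp add: linear_diff[OF \<open>linear \<Phi>\<close>])
  also have "\<dots> \<le> (1 - \<rho> * \<gamma>) * norm (\<Phi> e) + B * norm P"
    using contr B(2)[of P] by (meson add_mono norm_triangle_le)
  also have "B * norm P \<le> B * (\<gamma> * (\<eta> * (norm (\<Phi> e) / m) + s))"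
  proof -
    have "norm e \<le> norm (\<Phi> e) / m"
      using m by (simp add: field_simps mult.commute)
    then have "\<eta> * norm e \<le> \<eta> * (norm (\<Phi> e) / m)"
      using \<open>\<eta> \<ge> 0\<close> by (rule mult_left_mono)
    then have "norm P \<le> \<gamma> * (\<eta> * (norm (\<Phi> e) / m) + s)"
      using P \<open>\<gamma> \<ge> 0\<close> unfolding P_def by (smt (verit) mult_left_mono)
    then show ?thesis
      using B(1) by (simp add: mult_left_mono)
  qed
  finally show ?thesis
    using m(1) by (simp add: field_simps)
qed

lemma strictly_dissipative_perturbed_euler_tendsto_zero:
  fixes \<Phi> :: "'a::euclidean_space \<Rightarrow> 'b::euclidean_space" and e :: "nat \<Rightarrow> 'a"
  assumes diss: "strictly_dissipative \<Phi> r L" and "linear L"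
    and \<gamma>_div: "\<not> summable \<gamma>" and \<gamma>_lim: "\<gamma> \<longlonglongrightarrow> 0" and \<eta>_lim: "\<eta> \<longlonglongrightarrow> 0" and s_lim: "s \<longlonglongrightarrow> 0"
    and step: "eventually (\<lambda>n. \<gamma> n > 0 \<and> \<eta> n \<ge> 0 \<and>
      norm (e (Suc n) - (e n + \<gamma> n *\<^sub>R L (e n))) \<le> \<gamma> n * (\<eta> n * norm (e n) + s n)) sequentially"
  shows "e \<longlonglongrightarrow> 0"
proof -
  have "linear \<Phi>" "inj \<Phi>"
    using diss unfolding strictly_dissipative_def by auto
  obtain t0 \<rho> where "t0 > 0" "\<rho> > 0"
    and contr: "\<And>t x. 0 < t \<Longrightarrow> t \<le> t0 \<Longrightarrow> norm (\<Phi> (x + t *\<^sub>R L x)) \<le> (1 - \<rho> * t) * norm (\<Phi> x)"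
    using strictly_dissipative_euler_contraction[OF diss \<open>linear L\<close>] by metis
  obtain m where m: "m > 0" "\<And>x. m * norm x \<le> norm (\<Phi> x)"
    using linear_inj_bounded_below_pos[OF \<open>linear \<Phi>\<close> \<open>inj \<Phi>\<close>] by blast
  obtain B where B: "B > 0" "\<And>x. norm (\<Phi> x) \<le> B * norm x"
    using linear_bounded_pos[OF \<open>linear \<Phi>\<close>] by blast
  define x where "x n = norm (\<Phi> (e n))" for n
  have e_le: "norm (e n) \<le> x n / m" for n
    using m by (simp add: x_def field_simps mult.commute)
  have x_step: "x (Suc n) \<le> (1 - \<rho> * \<gamma> n + \<gamma> n * (B * \<eta> n / m)) * x n + \<gamma> n * (B * s n)"
    if "0 < \<gamma> n" "\<gamma> n \<le> t0" "\<eta> n \<ge> 0"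
      and "norm (e (Suc n) - (e n + \<gamma> n *\<^sub>R L (e n))) \<le> \<gamma> n * (\<eta> n * norm (e n) + s n)" for n
    unfolding x_def using that m B contr[of "\<gamma> n" "e n"]
    by (intro norm_perturbed_euler_step[OF \<open>linear \<Phi>\<close>]) auto
  have "x \<longlonglongrightarrow> 0"
  proof (rule perturbed_contraction_tendsto_zero[OF _ \<gamma>_div \<gamma>_lim _ _ \<open>\<rho> > 0\<close>])
    show "(\<lambda>n. B * \<eta> n / m) \<longlonglongrightarrow> 0" and "(\<lambda>n. B * s n) \<longlonglongrightarrow> 0"
      using tendsto_mult_right_zero[OF \<eta>_lim, of B] tendsto_mult_right_zero[OF s_lim, of B]
      by (auto intro: tendsto_divide_zero)
    show "eventually (\<lambda>n. \<gamma> n \<ge> 0 \<and> x (Suc n) \<le> (1 - \<rho> * \<gamma> n + \<gamma> n * (B * \<eta> n / m)) * x n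
        + \<gamma> n * (B * s n)) sequentially"
      using step order_tendstoD(2)[OF \<gamma>_lim \<open>t0 > 0\<close>] by eventually_elim (use x_step in auto)
  qed (simp add: x_def)
  show ?thesis
  proof (rule Lim_null_comparison)
    show "eventually (\<lambda>n. norm (e n) \<le> x n / m) sequentially"
      using e_le by simp
    show "(\<lambda>n. x n / m) \<longlonglongrightarrow> 0"
      using tendsto_divide_zero[OF \<open>x \<longlonglongrightarrow> 0\<close>] .
  qed
qed

lemma pos_if_decreasing_along_null_orbits:
  fixes q :: "'a::t2_space \<Rightarrow> real" and F :: "'a \<Rightarrow> 'a"
  assumes "isCont q z" and orbit: "\<And>x. (\<lambda>k. (F ^^ k) x) \<longlonglongrightarrow> z"
    and decr: "\<And>x. q (F x) \<le> q x" and strict: "q (F y) < q y"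
  shows "q y > q z"
proof -
  have "decseq (\<lambda>k. q ((F ^^ k) (F y)))"
    using decr by (intro decseq_SucI) simp
  moreover have "(\<lambda>k. q ((F ^^ k) (F y))) \<longlonglongrightarrow> q z"
    using isCont_tendsto_compose[OF \<open>isCont q z\<close> orbit] .
  ultimately have "q z \<le> q (F y)"
    using decseq_ge[of _ "q z" 0] by fastforce
  with strict show ?thesis
    by simp
qed

section \<open>Numerical range of a rescaled Schur form\<close>

lemma schur_triangularization:
  fixes M :: "complex mat"
  assumes M: "M \<in> carrier_mat n n"
  obtains T P Q where "similar_mat_wit M T P Q" "upper_triangular T"
    "\<And>i. i < n \<Longrightarrow> poly (char_poly M) (T $$ (i, i)) = 0"
proof -
  obtain es where char_poly: "char_poly M = (\<Prod>a\<leftarrow>es. [:- a, 1:])"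
    using char_poly_factorized[OF M] by auto
  obtain T P Q where decomp: "schur_decomposition M es = (T, P, Q)"
    by (cases "schur_decomposition M es") auto
  from schur_decomposition[OF M char_poly decomp]
  have sim: "similar_mat_wit M T P Q" and "upper_triangular T" and diag: "diag_mat T = es"
    by auto
  moreover have "poly (char_poly M) (T $$ (i, i)) = 0" if "i < n" for i
  proof -
    have "T $$ (i, i) \<in> set es"
      using diag similar_mat_witD2[OF M sim] that unfolding diag_mat_def by auto
    then show ?thesis
      unfolding char_poly poly_prod_list by (induct es) (auto simp: prod_list_zero_iff)
  qed
  ultimately show thesis
    using that by blast
qed

lemma diagonal_rescaling_similar:
  fixes M T :: "complex mat"
  assumes M: "M \<in> carrier_mat n n" and sim: "similar_mat_wit M T P Q" and "\<epsilon> > 0"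
  obtains R R' where "R \<in> carrier_mat n n" "R' \<in> carrier_mat n n" "R * R' = 1\<^sub>m n" "R' * R = 1\<^sub>m n"
    "R * M * R' = mat n n (\<lambda>(i, j). complex_of_real (inverse \<epsilon> ^ i * \<epsilon> ^ j) * T $$ (i, j))"
proof -
  have T: "T \<in> carrier_mat n n" and P: "P \<in> carrier_mat n n" and Q: "Q \<in> carrier_mat n n"
    and PQ: "P * Q = 1\<^sub>m n" "Q * P = 1\<^sub>m n" and M_eq: "M = P * T * Q"
    using similar_mat_witD2[OF M sim] by auto
  define D D' where "D = mat_diag n (\<lambda>i. complex_of_real (\<epsilon> ^ i))"
    and "D' = mat_diag n (\<lambda>i. complex_of_real (inverse \<epsilon> ^ i))"
  have D: "D \<in> carrier_mat n n" "D' \<in> carrier_mat n n" and DD': "D * D' = 1\<^sub>m n" "D' * D = 1\<^sub>m n"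
    unfolding D_def D'_def using \<open>\<epsilon> > 0\<close> by (auto simp flip: of_real_mult power_mult_distrib)
  show thesis
  proof (rule that[of "D' * Q" "P * D"])
    show "D' * Q \<in> carrier_mat n n" "P * D \<in> carrier_mat n n"
      using D P Q by auto
    have "D' * Q * (P * D) = D' * (Q * P) * D" and "P * D * (D' * Q) = P * (D * D') * Q"
      using D P Q by (simp_all add: assoc_mult_mat[of _ n n _ n _ n])
    then show "D' * Q * (P * D) = 1\<^sub>m n" "P * D * (D' * Q) = 1\<^sub>m n"
      using PQ DD' D P by simp_all
    have "D' * Q * M * (P * D) = D' * (Q * P) * T * (Q * P) * D"
      unfolding M_eq using D P Q T by (simp add: assoc_mult_mat[of _ n n _ n _ n])
    also have "\<dots> = D' * T * D"
      using PQ T D by simp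
    also have "\<dots> = mat n n (\<lambda>(i, j). complex_of_real (inverse \<epsilon> ^ i * \<epsilon> ^ j) * T $$ (i, j))"
      unfolding D_def D'_def using T
      by (subst mat_diag_mult_left[of _ n n], simp, subst mat_diag_mult_right[of _ n n]) auto
    finally show "D' * Q * M * (P * D) = \<dots>" .
  qed
qed

lemma abs_mult_le_sum_power2:
  fixes f :: "'a \<Rightarrow> real"
  assumes "finite I" "i \<in> I" "j \<in> I"
  shows "\<bar>f i\<bar> * \<bar>f j\<bar> \<le> (\<Sum>k\<in>I. (f k)\<^sup>2)"
proof -
  have "(f i)\<^sup>2 \<le> (\<Sum>k\<in>I. (f k)\<^sup>2)" "(f j)\<^sup>2 \<le> (\<Sum>k\<in>I. (f k)\<^sup>2)"
    using assms by (auto intro!: member_le_sum)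
  moreover have "\<bar>f i\<bar> * \<bar>f j\<bar> \<le> ((f i)\<^sup>2 + (f j)\<^sup>2) / 2"
    using sum_squares_ge_zero[of "\<bar>f i\<bar> - \<bar>f j\<bar>" 0] by (simp add: power2_eq_square algebra_simps)
  ultimately show ?thesis
    by argo
qed

lemma upper_triangular_rescaled_entry_bound:
  fixes T :: "complex mat" and y :: "complex vec"
  assumes T: "T \<in> carrier_mat n n" "upper_triangular T" and ij: "i < n" "j < n"
    and \<epsilon>: "0 < \<epsilon>" "\<epsilon> \<le> 1" and diag: "Re (T $$ (i, i)) \<le> - m"
    and S: "S \<ge> 0" "cmod (y $ i) * cmod (y $ j) \<le> S"
  shows "Re (cnj (y $ i) * (complex_of_real (inverse \<epsilon> ^ i * \<epsilon> ^ j) * T $$ (i, j) * y $ j))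
    \<le> (if i = j then - m * (cmod (y $ i))\<^sup>2 else \<epsilon> * cmod (T $$ (i, j)) * S)"
proof (cases i j rule: linorder_cases)
  case less
  have "inverse \<epsilon> ^ i * \<epsilon> ^ j = \<epsilon> ^ (j - i)"
    using less \<epsilon> by (simp add: power_diff field_simps power_inverse)
  also have "\<dots> \<le> \<epsilon>"
    using less \<epsilon> power_decreasing[of 1 "j - i" \<epsilon>] by simp
  finally have scale: "inverse \<epsilon> ^ i * \<epsilon> ^ j \<le> \<epsilon>" .
  have "Re (cnj (y $ i) * (complex_of_real (inverse \<epsilon> ^ i * \<epsilon> ^ j) * T $$ (i, j) * y $ j))
      \<le> cmod (cnj (y $ i) * (complex_of_real (inverse \<epsilon> ^ i * \<epsilon> ^ j) * T $$ (i, j) * y $ j))"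
    by (rule complex_Re_le_cmod)
  also have "\<dots> = (inverse \<epsilon> ^ i * \<epsilon> ^ j) * cmod (T $$ (i, j)) * (cmod (y $ i) * cmod (y $ j))"
    using \<epsilon> by (simp add: norm_mult norm_power norm_inverse)
  also have "\<dots> \<le> \<epsilon> * cmod (T $$ (i, j)) * S"
    using scale S \<epsilon> by (intro mult_mono) auto
  finally show ?thesis
    using less by simp
next
  case equal
  have entry: "complex_of_real (inverse \<epsilon> ^ i * \<epsilon> ^ j) * T $$ (i, j) = T $$ (i, i)"
    using equal \<epsilon> by (simp flip: power_mult_distrib)
  have "Re (cnj (y $ i) * (complex_of_real (inverse \<epsilon> ^ i * \<epsilon> ^ j) * T $$ (i, j) * y $ j))
      = Re (cnj (y $ i) * (T $$ (i, i) * y $ i))"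
    unfolding entry by (simp only: equal)
  also have "\<dots> = Re (T $$ (i, i)) * (cmod (y $ i))\<^sup>2"
    by (simp add: cmod_power2 algebra_simps) (simp add: power2_eq_square algebra_simps)
  also have "\<dots> \<le> - m * (cmod (y $ i))\<^sup>2"
    using diag by (intro mult_right_mono) auto
  finally show ?thesis
    using equal by simp
next
  case greater
  then have "T $$ (i, j) = 0"
    using T ij unfolding upper_triangular_def by auto
  then show ?thesis
    using greater S by simp
qed

lemma upper_triangular_rescaled_numerical_range:
  fixes T :: "complex mat" and y :: "complex vec"
  assumes T: "T \<in> carrier_mat n n" "upper_triangular T" and y: "y \<in> carrier_vec n"
    and \<epsilon>: "0 < \<epsilon>" "\<epsilon> \<le> 1" and diag: "\<And>i. i < n \<Longrightarrow> Re (T $$ (i, i)) \<le> - m"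
  defines "T\<^sub>\<epsilon> \<equiv> mat n n (\<lambda>(i, j). complex_of_real (inverse \<epsilon> ^ i * \<epsilon> ^ j) * T $$ (i, j))"
  shows "Re (\<Sum>i<n. cnj (y $ i) * (T\<^sub>\<epsilon> *\<^sub>v y) $ i)
    \<le> (- m + \<epsilon> * (\<Sum>i<n. \<Sum>j<n. cmod (T $$ (i, j)))) * (\<Sum>i<n. (cmod (y $ i))\<^sup>2)"
proof -
  define S where "S = (\<Sum>i<n. (cmod (y $ i))\<^sup>2)"
  have "S \<ge> 0"
    unfolding S_def by (intro sum_nonneg) auto
  have "Re (\<Sum>i<n. cnj (y $ i) * (T\<^sub>\<epsilon> *\<^sub>v y) $ i)
      = (\<Sum>i<n. \<Sum>j<n. Re (cnj (y $ i) * (complex_of_real (inverse \<epsilon> ^ i * \<epsilon> ^ j) * T $$ (i, j) * y $ j)))"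
    using y by (simp add: T\<^sub>\<epsilon>_def scalar_prod_def sum_distrib_left Re_sum lessThan_atLeast0)
  also have "\<dots> \<le> (\<Sum>i<n. \<Sum>j<n. if i = j then - m * (cmod (y $ i))\<^sup>2 else \<epsilon> * cmod (T $$ (i, j)) * S)"
    using T \<epsilon> diag \<open>S \<ge> 0\<close> abs_mult_le_sum_power2[of "{..<n}" _ _ "\<lambda>k. cmod (y $ k)"]
    by (intro sum_mono upper_triangular_rescaled_entry_bound) (auto simp: S_def)
  also have "\<dots> \<le> (\<Sum>i<n. - m * (cmod (y $ i))\<^sup>2 + (\<Sum>j<n. \<epsilon> * cmod (T $$ (i, j)) * S))"
  proof (rule sum_mono)
    fix i
    assume "i \<in> {..<n}"
    then have "(\<Sum>j<n. if i = j then - m * (cmod (y $ i))\<^sup>2 else \<epsilon> * cmod (T $$ (i, j)) * S)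
        = - m * (cmod (y $ i))\<^sup>2 + (\<Sum>j\<in>{..<n} - {i}. \<epsilon> * cmod (T $$ (i, j)) * S)"
      by (simp add: sum.remove[of "{..<n}" i])
    also have "\<dots> \<le> - m * (cmod (y $ i))\<^sup>2 + (\<Sum>j<n. \<epsilon> * cmod (T $$ (i, j)) * S)"
      using \<epsilon> \<open>S \<ge> 0\<close> by (intro add_left_mono sum_mono2) auto
    finally show "(\<Sum>j<n. if i = j then - m * (cmod (y $ i))\<^sup>2 else \<epsilon> * cmod (T $$ (i, j)) * S)
        \<le> - m * (cmod (y $ i))\<^sup>2 + (\<Sum>j<n. \<epsilon> * cmod (T $$ (i, j)) * S)" .
  qed
  also have "\<dots> = (- m + \<epsilon> * (\<Sum>i<n. \<Sum>j<n. cmod (T $$ (i, j)))) * S"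
  proof -
    have "(\<Sum>i<n. - m * (cmod (y $ i))\<^sup>2) = - m * S"
      by (simp add: S_def sum_distrib_left)
    moreover have "(\<Sum>i<n. \<Sum>j<n. \<epsilon> * cmod (T $$ (i, j)) * S) = \<epsilon> * (\<Sum>i<n. \<Sum>j<n. cmod (T $$ (i, j))) * S"
      by (simp add: sum_distrib_left sum_distrib_right mult.assoc)
    ultimately show ?thesis
      unfolding sum.distrib by (simp add: algebra_simps)
  qed
  finally show ?thesis
    unfolding S_def .
qed

lemma similar_mat_numerical_range_bound:
  fixes M :: "complex mat"
  assumes M: "M \<in> carrier_mat n n" and eig: "\<And>e. poly (char_poly M) e = 0 \<Longrightarrow> Re e < - a"
  obtains R R' \<kappa> where "R \<in> carrier_mat n n" "R' \<in> carrier_mat n n" "R * R' = 1\<^sub>m n" "R' * R = 1\<^sub>m n"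
    "\<kappa> > a" "\<And>y. y \<in> carrier_vec n \<Longrightarrow>
       Re (\<Sum>i<n. cnj (y $ i) * ((R * M * R') *\<^sub>v y) $ i) \<le> - \<kappa> * (\<Sum>i<n. (cmod (y $ i))\<^sup>2)"
proof -
  obtain T P Q where sim: "similar_mat_wit M T P Q" and "upper_triangular T"
    and T_diag: "\<And>i. i < n \<Longrightarrow> poly (char_poly M) (T $$ (i, i)) = 0"
    using schur_triangularization[OF M] by blast
  have T: "T \<in> carrier_mat n n"
    using similar_mat_witD2[OF M sim] by auto
  define m where "m = Min (insert (a + 1) ((\<lambda>i. - Re (T $$ (i, i))) ` {..<n}))"
  have "m > a"
    unfolding m_def using eig[OF T_diag] by (subst Min_gr_iff) (auto simp: less_minus_iff)
  have m_le: "Re (T $$ (i, i)) \<le> - m" if "i < n" for i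
  proof -
    have "m \<le> - Re (T $$ (i, i))"
      unfolding m_def using that by (intro Min_le) auto
    then show ?thesis
      by simp
  qed
  define K where "K = (\<Sum>i<n. \<Sum>j<n. cmod (T $$ (i, j)))"
  have "K \<ge> 0"
    unfolding K_def by (intro sum_nonneg) auto
  define \<epsilon> where "\<epsilon> = min 1 ((m - a) / (2 * (K + 1)))"
  have \<epsilon>: "0 < \<epsilon>" "\<epsilon> \<le> 1"
    using \<open>m > a\<close> \<open>K \<ge> 0\<close> unfolding \<epsilon>_def by auto
  have "\<epsilon> * K \<le> (m - a) / (2 * (K + 1)) * K"
    using \<open>K \<ge> 0\<close> unfolding \<epsilon>_def by (intro mult_right_mono) auto
  also have "\<dots> \<le> (m - a) / 2"
    using \<open>K \<ge> 0\<close> \<open>m > a\<close> by (simp add: field_simps)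
  finally have \<epsilon>K: "- m + \<epsilon> * K \<le> - ((m + a) / 2)"
    by (simp add: field_simps)
  obtain R R' where R: "R \<in> carrier_mat n n" "R' \<in> carrier_mat n n" "R * R' = 1\<^sub>m n" "R' * R = 1\<^sub>m n"
    and RMR': "R * M * R' = mat n n (\<lambda>(i, j). complex_of_real (inverse \<epsilon> ^ i * \<epsilon> ^ j) * T $$ (i, j))"
    using diagonal_rescaling_similar[OF M sim \<open>0 < \<epsilon>\<close>] by blast
  show thesis
  proof (rule that[OF R])
    show "(m + a) / 2 > a"
      using \<open>m > a\<close> by simp
    fix y :: "complex vec"
    assume "y \<in> carrier_vec n"
    from upper_triangular_rescaled_numerical_range[OF T \<open>upper_triangular T\<close> this \<epsilon> m_le]
    show "Re (\<Sum>i<n. cnj (y $ i) * ((R * M * R') *\<^sub>v y) $ i) \<le> - ((m + a) / 2) * (\<Sum>i<n. (cmod (y $ i))\<^sup>2)"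
      unfolding RMR' K_def[symmetric] using \<epsilon>K
      by (meson mult_right_mono order_trans sum_nonneg zero_le_power2)
  qed
qed

no_notation vec_index (infixl "$" 100)

lemma inner_complex_vec: "(y :: complex^'n) \<bullet> z = Re (\<Sum>k\<in>UNIV. cnj (y $ k) * z $ k)"
  by (simp add: inner_vec_def inner_complex_def Re_sum)

lemma norm_complex_vec_power2: "(norm (y :: complex^'n))\<^sup>2 = (\<Sum>k\<in>UNIV. (cmod (y $ k))\<^sup>2)"
  by (simp add: power2_norm_eq_inner inner_vec_def)

text \<open>Matrices of \<open>Jordan_Normal_Form\<close> are indexed by \<open>{..<n}\<close>; an enumeration \<open>ix\<close> of the
  finite index type \<open>'n\<close> translates them to and from \<open>'a^'n^'n\<close>.\<close>

context
  fixes ix :: "nat \<Rightarrow> 'n::finite"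
  assumes ix: "bij_betw ix {..<CARD('n)} UNIV"
begin

definition ix_inv :: "'n \<Rightarrow> nat" where
  "ix_inv = inv_into {..<CARD('n)} ix"

lemma ix_inv_less: "ix_inv k < CARD('n)"
  unfolding ix_inv_def using ix by (metis bij_betw_def inv_into_into lessThan_iff UNIV_I)

lemma ix_ix_inv [simp]: "ix (ix_inv k) = k"
  unfolding ix_inv_def using ix by (meson UNIV_I bij_betw_inv_into_right)

lemma ix_inv_ix [simp]: "i < CARD('n) \<Longrightarrow> ix_inv (ix i) = i"
  unfolding ix_inv_def using ix by (simp add: bij_betw_inv_into_left)

lemma ix_inv_eq_iff: "ix_inv k = ix_inv l \<longleftrightarrow> k = l"
  by (metis ix_ix_inv)

lemma sum_UNIV_reindex: "(\<Sum>k\<in>UNIV. g k) = (\<Sum>i<CARD('n). g (ix i))"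
  using sum.reindex_bij_betw[OF ix, of g] by simp

definition to_jnf :: "'a^'n^'n \<Rightarrow> 'a mat" where
  "to_jnf X = Matrix.mat CARD('n) CARD('n) (\<lambda>(i, j). X $ ix i $ ix j)"

definition of_jnf :: "'a mat \<Rightarrow> 'a^'n^'n" where
  "of_jnf A = (\<chi> k l. A $$ (ix_inv k, ix_inv l))"

definition to_jnf_vec :: "'a^'n \<Rightarrow> 'a Matrix.vec" where
  "to_jnf_vec y = Matrix.vec CARD('n) (\<lambda>i. y $ ix i)"

lemma to_jnf_carrier: "to_jnf X \<in> carrier_mat CARD('n) CARD('n)"
  unfolding to_jnf_def by auto

lemma of_jnf_to_jnf: "of_jnf (to_jnf X) = X"
  unfolding of_jnf_def to_jnf_def by (simp add: Finite_Cartesian_Product.vec_eq_iff ix_inv_less)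

lemma of_jnf_mult:
  fixes A B :: "'a::comm_semiring_1 mat"
  assumes "A \<in> carrier_mat CARD('n) CARD('n)" "B \<in> carrier_mat CARD('n) CARD('n)"
  shows "of_jnf (A * B) = of_jnf A ** of_jnf B"
proof -
  have "(of_jnf A ** of_jnf B) $ k $ l = of_jnf (A * B) $ k $ l" for k l
  proof -
    have "(of_jnf A ** of_jnf B) $ k $ l = (\<Sum>i<CARD('n). A $$ (ix_inv k, i) * B $$ (i, ix_inv l))"
      unfolding of_jnf_def matrix_matrix_mult_def by (simp add: sum_UNIV_reindex)
    also have "\<dots> = (A * B) $$ (ix_inv k, ix_inv l)"
      using assms ix_inv_less by (auto simp: scalar_prod_def lessThan_atLeast0 intro!: sum.cong)
    finally show ?thesis
      by (simp add: of_jnf_def)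
  qed
  then show ?thesis
    by (simp add: Finite_Cartesian_Product.vec_eq_iff)
qed

lemma of_jnf_one: "of_jnf (1\<^sub>m CARD('n)) = (Finite_Cartesian_Product.mat 1 :: 'a::zero_neq_one^'n^'n)"
  unfolding of_jnf_def by (simp add: Finite_Cartesian_Product.vec_eq_iff Finite_Cartesian_Product.mat_def ix_inv_less ix_inv_eq_iff)

lemma of_jnf_mult_vec:
  fixes A :: "'a::comm_semiring_1 mat"
  assumes "A \<in> carrier_mat CARD('n) CARD('n)"
  shows "(of_jnf A *v y) $ k = vec_index (A *\<^sub>v to_jnf_vec y) (ix_inv k)"
proof -
  have "(of_jnf A *v y) $ k = (\<Sum>j<CARD('n). A $$ (ix_inv k, j) * y $ ix j)"
    unfolding of_jnf_def matrix_vector_mult_def by (simp add: sum_UNIV_reindex)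
  then show ?thesis
    using assms ix_inv_less
    by (auto simp: scalar_prod_def to_jnf_vec_def lessThan_atLeast0 intro!: sum.cong)
qed

lemma is_eigenvalue_if_root_char_poly:
  fixes B :: "real^'n^'n"
  assumes "poly (char_poly (to_jnf (cmat B))) e = 0"
  shows "is_eigenvalue B e"
proof -
  have "eigenvalue (to_jnf (cmat B)) e"
    using assms eigenvalue_root_char_poly[OF to_jnf_carrier[of "cmat B"]] by simp
  then obtain v where v: "v \<in> carrier_vec CARD('n)" "v \<noteq> 0\<^sub>v CARD('n)"
    and ev: "to_jnf (cmat B) *\<^sub>v v = e \<cdot>\<^sub>v v"
    unfolding eigenvalue_def eigenvector_def by (auto simp: carrier_matD[OF to_jnf_carrier])
  define w :: "complex^'n" where "w = (\<chi> k. vec_index v (ix_inv k))"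
  have "(cmat B *v w) $ k = e * w $ k" for k
  proof -
    have "(cmat B *v w) $ k = vec_index (to_jnf (cmat B) *\<^sub>v v) (ix_inv k)"
      unfolding matrix_vector_mult_def w_def sum_UNIV_reindex
      using v ix_inv_less by (auto simp: to_jnf_def scalar_prod_def lessThan_atLeast0 intro!: sum.cong)
    then show ?thesis
      unfolding ev w_def using v ix_inv_less by simp
  qed
  moreover have "w \<noteq> 0"
  proof
    assume "w = 0"
    then have "vec_index v i = 0" if "i < CARD('n)" for i
      using that unfolding w_def by (metis ix_inv_ix vec_lambda_beta zero_index)
    then show False
      using v by (metis carrier_vecD eq_vecI index_zero_vec)
  qed
  ultimately show ?thesis
    unfolding is_eigenvalue_def by (metis Finite_Cartesian_Product.vec_eq_iff vector_smult_component)
qed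

lemma similar_numerical_range_bound_indexed:
  fixes B :: "real^'n^'n"
  assumes eig: "\<And>\<mu>. is_eigenvalue B \<mu> \<Longrightarrow> Re \<mu> < - a"
  obtains R R' :: "complex^'n^'n" and \<kappa>
  where "R ** R' = Finite_Cartesian_Product.mat 1" "R' ** R = Finite_Cartesian_Product.mat 1" "\<kappa> > a"
    "\<forall>y. y \<bullet> ((R ** cmat B ** R') *v y) \<le> - \<kappa> * (norm y)\<^sup>2"
proof -
  let ?M = "to_jnf (cmat B)"
  have M: "?M \<in> carrier_mat CARD('n) CARD('n)"
    by (rule to_jnf_carrier)
  have eig': "\<And>e. poly (char_poly ?M) e = 0 \<Longrightarrow> Re e < - a"
    using eig is_eigenvalue_if_root_char_poly by blast
  obtain R R' \<kappa> where R: "R \<in> carrier_mat CARD('n) CARD('n)" "R' \<in> carrier_mat CARD('n) CARD('n)"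
    and RR': "R * R' = 1\<^sub>m CARD('n)" "R' * R = 1\<^sub>m CARD('n)" and "\<kappa> > a"
    and bound: "\<And>y. y \<in> carrier_vec CARD('n) \<Longrightarrow>
      Re (\<Sum>i<CARD('n). cnj (vec_index y i) * vec_index ((R * ?M * R') *\<^sub>v y) i)
        \<le> - \<kappa> * (\<Sum>i<CARD('n). (cmod (vec_index y i))\<^sup>2)"
    using similar_mat_numerical_range_bound[OF M eig'] by blast
  have RMR': "R * ?M * R' \<in> carrier_mat CARD('n) CARD('n)"
    using R M by auto
  have conj: "of_jnf R ** cmat B ** of_jnf R' = of_jnf (R * ?M * R')"
    using R M by (simp add: of_jnf_mult of_jnf_to_jnf matrix_mul_assoc)
  show thesis
  proof (rule that)
    show "of_jnf R ** of_jnf R' = Finite_Cartesian_Product.mat 1"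
      and "of_jnf R' ** of_jnf R = Finite_Cartesian_Product.mat 1"
      using R RR' by (simp_all flip: of_jnf_mult add: of_jnf_one)
    show "\<kappa> > a" by fact
    show "\<forall>y. y \<bullet> ((of_jnf R ** cmat B ** of_jnf R') *v y) \<le> - \<kappa> * (norm y)\<^sup>2"
    proof
      fix y :: "complex^'n"
      have "y \<bullet> ((of_jnf R ** cmat B ** of_jnf R') *v y)
          = Re (\<Sum>i<CARD('n). cnj (vec_index (to_jnf_vec y) i) * vec_index ((R * ?M * R') *\<^sub>v to_jnf_vec y) i)"
        unfolding inner_complex_vec conj sum_UNIV_reindex of_jnf_mult_vec[OF RMR']
        by (simp add: to_jnf_vec_def)
      also have "\<dots> \<le> - \<kappa> * (\<Sum>i<CARD('n). (cmod (vec_index (to_jnf_vec y) i))\<^sup>2)"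
        by (rule bound) (simp add: to_jnf_vec_def)
      also have "\<dots> = - \<kappa> * (norm y)\<^sup>2"
        unfolding norm_complex_vec_power2 sum_UNIV_reindex by (simp add: to_jnf_vec_def)
      finally show "y \<bullet> ((of_jnf R ** cmat B ** of_jnf R') *v y) \<le> - \<kappa> * (norm y)\<^sup>2" .
    qed
  qed
qed

end

lemma similar_numerical_range_bound:
  fixes B :: "real^'n^'n"
  assumes "\<And>\<mu>. is_eigenvalue B \<mu> \<Longrightarrow> Re \<mu> < - a"
  obtains R R' :: "complex^'n^'n" and \<kappa>
  where "R ** R' = Finite_Cartesian_Product.mat 1" "R' ** R = Finite_Cartesian_Product.mat 1" "\<kappa> > a"
    "\<forall>y. y \<bullet> ((R ** cmat B ** R') *v y) \<le> - \<kappa> * (norm y)\<^sup>2"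
proof -
  obtain ix :: "nat \<Rightarrow> 'n" where "bij_betw ix {..<CARD('n)} UNIV"
    using ex_bij_betw_nat_finite[of "UNIV :: 'n set"] by (auto simp: lessThan_atLeast0)
  from similar_numerical_range_bound_indexed[OF this assms] that show thesis
    by blast
qed

lemma matrix_add_rdistrib: "((A :: 'a::semiring_1^'n^'m) + B) ** C = A ** C + B ** C"
  by (simp add: Finite_Cartesian_Product.vec_eq_iff matrix_matrix_mult_def distrib_right sum.distrib)

lemma matrix_transpose_add: "transpose ((A :: 'a::semiring_1^'n^'m) + B) = transpose A + transpose B"
  by (simp add: Finite_Cartesian_Product.vec_eq_iff transpose_def)

lemma matrix_transpose_uminus: "transpose (- (A :: 'a::ring_1^'n^'m)) = - transpose A"
  by (simp add: Finite_Cartesian_Product.vec_eq_iff transpose_def)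

lemma matrix_vector_mult_scaleR_right:
  "(M :: 'a::real_algebra_1^'n^'m) *v (r *\<^sub>R v) = r *\<^sub>R (M *v v)"
  by (simp add: Finite_Cartesian_Product.vec_eq_iff matrix_vector_mult_def scaleR_sum_right)

definition cvec :: "real^'n \<Rightarrow> complex^'n" where
  "cvec y = (\<chi> i. complex_of_real (y $ i))"

definition cnj_transpose :: "complex^'n^'m \<Rightarrow> complex^'m^'n" where
  "cnj_transpose Z = (\<chi> i j. cnj (Z $ j $ i))"

lemma cvec_add: "cvec (x + y) = cvec x + cvec y"
  by (simp add: Finite_Cartesian_Product.vec_eq_iff cvec_def)

lemma cvec_scaleR: "cvec (r *\<^sub>R x) = r *\<^sub>R cvec x"
  by (simp add: Finite_Cartesian_Product.vec_eq_iff cvec_def complex_eq_iff)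

lemma cvec_eq_iff: "cvec x = cvec y \<longleftrightarrow> x = y"
  by (simp add: Finite_Cartesian_Product.vec_eq_iff cvec_def)

lemma cmat_mult_cvec: "cmat A *v cvec y = cvec (A *v y)"
  by (simp add: Finite_Cartesian_Product.vec_eq_iff cvec_def cmat_def matrix_vector_mult_def)

lemma cmat_mult: "cmat (A ** B) = cmat A ** cmat B"
  by (simp add: Finite_Cartesian_Product.vec_eq_iff cmat_def matrix_matrix_mult_def)

lemma cmat_add: "cmat (A + B) = cmat A + cmat B"
  by (simp add: Finite_Cartesian_Product.vec_eq_iff cmat_def)

lemma cmat_scaleR: "cmat (r *\<^sub>R A) = r *\<^sub>R cmat A"
  by (simp add: Finite_Cartesian_Product.vec_eq_iff cmat_def complex_eq_iff)

lemma cmat_eq_iff: "cmat A = cmat B \<longleftrightarrow> A = B"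
  by (simp add: Finite_Cartesian_Product.vec_eq_iff cmat_def)

lemma cmat_transpose: "cmat (transpose A) = cnj_transpose (cmat A)"
  by (simp add: Finite_Cartesian_Product.vec_eq_iff cmat_def cnj_transpose_def transpose_def)

lemma cnj_transpose_cnj_transpose [simp]: "cnj_transpose (cnj_transpose Z) = Z"
  by (simp add: Finite_Cartesian_Product.vec_eq_iff cnj_transpose_def)

lemma cnj_transpose_mult: "cnj_transpose (X ** Y) = cnj_transpose Y ** cnj_transpose X"
  by (simp add: Finite_Cartesian_Product.vec_eq_iff cnj_transpose_def matrix_matrix_mult_def
      cnj_sum mult.commute)

lemma cnj_transpose_one: "cnj_transpose (Finite_Cartesian_Product.mat 1) = Finite_Cartesian_Product.mat 1"
  by (simp add: Finite_Cartesian_Product.vec_eq_iff cnj_transpose_def Finite_Cartesian_Product.mat_def)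

lemma cnj_transpose_left_inverse:
  assumes "R' ** R = Finite_Cartesian_Product.mat 1"
  shows "cnj_transpose R ** cnj_transpose R' = Finite_Cartesian_Product.mat 1"
  using assms by (simp flip: cnj_transpose_mult add: cnj_transpose_one)

lemma inner_cnj_transpose: "cnj_transpose X \<bullet> cnj_transpose Y = X \<bullet> Y"
  unfolding inner_vec_def cnj_transpose_def inner_complex_def
  by (subst sum.swap) simp

lemma norm_cnj_transpose: "norm (cnj_transpose X) = norm X"
  by (simp add: norm_eq_sqrt_inner inner_cnj_transpose)

lemma inner_cnj_transpose_mult_vec: "u \<bullet> (cnj_transpose C *v u) = u \<bullet> (C *v u)"
proof -
  have "(\<Sum>k\<in>UNIV. cnj (u $ k) * (cnj_transpose C *v u) $ k)
      = (\<Sum>k\<in>UNIV. \<Sum>j\<in>UNIV. cnj (u $ k) * (cnj (C $ j $ k) * u $ j))"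
    by (simp add: cnj_transpose_def matrix_vector_mult_def sum_distrib_left)
  also have "\<dots> = cnj (\<Sum>j\<in>UNIV. \<Sum>k\<in>UNIV. cnj (u $ j) * (C $ j $ k * u $ k))"
    by (subst sum.swap) (simp add: cnj_sum mult_ac)
  also have "\<dots> = cnj (\<Sum>j\<in>UNIV. cnj (u $ j) * (C *v u) $ j)"
    by (simp add: matrix_vector_mult_def sum_distrib_left)
  finally show ?thesis
    unfolding inner_complex_vec by simp
qed

lemma inner_mult_left_le:
  fixes C :: "complex^'n^'n"
  assumes C: "\<And>y. y \<bullet> (C *v y) \<le> - \<kappa> * (norm y)\<^sup>2"
  shows "Z \<bullet> (C ** Z) \<le> - \<kappa> * (norm Z)\<^sup>2"
proof -
  define col where "col j = (\<chi> i. Z $ i $ j)" for j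
  have "Z \<bullet> (C ** Z) = (\<Sum>i\<in>UNIV. \<Sum>j\<in>UNIV. Re (cnj (Z $ i $ j) * (C ** Z) $ i $ j))"
    unfolding inner_vec_def[of Z] inner_complex_vec by (simp add: Re_sum)
  also have "\<dots> = (\<Sum>j\<in>UNIV. \<Sum>i\<in>UNIV. Re (cnj (col j $ i) * (C *v col j) $ i))"
    by (subst sum.swap) (simp add: col_def matrix_matrix_mult_def matrix_vector_mult_def)
  also have "\<dots> = (\<Sum>j\<in>UNIV. col j \<bullet> (C *v col j))"
    by (simp add: inner_complex_vec Re_sum)
  also have "\<dots> \<le> (\<Sum>j\<in>UNIV. - \<kappa> * (norm (col j))\<^sup>2)"
    using C by (intro sum_mono) auto
  also have "\<dots> = - \<kappa> * (norm Z)\<^sup>2"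
    unfolding norm_complex_vec_power2 col_def sum_distrib_left[symmetric]
    by (subst sum.swap) (simp add: power2_norm_eq_inner inner_vec_def norm_complex_vec_power2)
  finally show ?thesis .
qed

lemma inner_mult_right_le:
  fixes C :: "complex^'n^'n"
  assumes "\<And>y. y \<bullet> (C *v y) \<le> - \<kappa> * (norm y)\<^sup>2"
  shows "Z \<bullet> (Z ** cnj_transpose C) \<le> - \<kappa> * (norm Z)\<^sup>2"
proof -
  have "Z \<bullet> (Z ** cnj_transpose C) = cnj_transpose Z \<bullet> (C ** cnj_transpose Z)"
    by (metis inner_cnj_transpose cnj_transpose_mult cnj_transpose_cnj_transpose)
  also have "\<dots> \<le> - \<kappa> * (norm Z)\<^sup>2"
    using inner_mult_left_le[OF assms] by (metis norm_cnj_transpose)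
  finally show ?thesis .
qed

section \<open>The Lyapunov operator\<close>

definition lyapunov_op :: "real \<Rightarrow> real^'n^'n \<Rightarrow> real^'n^'n \<Rightarrow> real^'n^'n" where
  "lyapunov_op c A W = A ** W + W ** transpose A + c *\<^sub>R W"

lemma linear_lyapunov_op: "linear (lyapunov_op c A)"
  by (rule linearI) (simp_all add: lyapunov_op_def matrix_add_ldistrib matrix_add_rdistrib
      matrix_scalar_ac scalar_matrix_assoc algebra_simps)

lemma lyapunov_op_transpose: "lyapunov_op c A (transpose W) = transpose (lyapunov_op c A W)"
  by (simp add: lyapunov_op_def matrix_transpose_add matrix_transpose_mul transpose_scalar add.commute)

lemma lyapunov_op_conjugate:
  fixes A W :: "real^'n^'n"
  assumes RR': "R' ** R = Finite_Cartesian_Product.mat 1"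
  defines "C \<equiv> R ** cmat A ** R'" and "Z \<equiv> R ** cmat W ** cnj_transpose R"
  shows "R ** cmat (lyapunov_op c A W) ** cnj_transpose R = C ** Z + Z ** cnj_transpose C + c *\<^sub>R Z"
proof -
  have "C ** Z = R ** cmat A ** (R' ** R) ** cmat W ** cnj_transpose R"
    unfolding C_def Z_def by (simp add: matrix_mul_assoc)
  also have "\<dots> = R ** cmat (A ** W) ** cnj_transpose R"
    using RR' by (simp add: matrix_mul_rid cmat_mult matrix_mul_assoc)
  finally have left: "C ** Z = R ** cmat (A ** W) ** cnj_transpose R" .
  have "Z ** cnj_transpose C
      = R ** cmat W ** (cnj_transpose R ** cnj_transpose R') ** cnj_transpose (cmat A) ** cnj_transpose R"
    unfolding C_def Z_def by (simp add: cnj_transpose_mult matrix_mul_assoc)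
  also have "\<dots> = R ** cmat (W ** transpose A) ** cnj_transpose R"
    using cnj_transpose_left_inverse[OF RR']
    by (simp add: matrix_mul_rid cmat_mult cmat_transpose matrix_mul_assoc)
  finally have right: "Z ** cnj_transpose C = R ** cmat (W ** transpose A) ** cnj_transpose R" .
  have "R ** cmat (lyapunov_op c A W) ** cnj_transpose R
      = R ** cmat (A ** W) ** cnj_transpose R + R ** cmat (W ** transpose A) ** cnj_transpose R + c *\<^sub>R Z"
    by (simp add: Z_def lyapunov_op_def cmat_add cmat_scaleR matrix_add_ldistrib matrix_add_rdistrib
        matrix_scalar_ac scalar_matrix_assoc)
  then show ?thesis
    by (simp only: left right)
qed

text \<open>With \<open>\<Phi> W = R W R\<^sup>*\<close> the operator becomes \<open>Z \<mapsto> C Z + Z C\<^sup>* + c Z\<close>; both \<open>C\<close> and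
  \<open>C\<^sup>*\<close> have numerical range left of \<open>-\<kappa>\<close>, which gives the rate \<open>2 \<kappa> - c\<close>.\<close>

lemma lyapunov_op_strictly_dissipative:
  fixes A :: "real^'n^'n"
  assumes eig: "\<And>\<mu>. is_eigenvalue A \<mu> \<Longrightarrow> Re \<mu> < - (c / 2)"
  obtains \<Phi> :: "real^'n^'n \<Rightarrow> complex^'n^'n" and r where "strictly_dissipative \<Phi> r (lyapunov_op c A)"
proof -
  obtain R R' :: "complex^'n^'n" and \<kappa> where "R ** R' = Finite_Cartesian_Product.mat 1"
    and RR': "R' ** R = Finite_Cartesian_Product.mat 1" and "\<kappa> > c / 2"
    and C: "\<forall>y. y \<bullet> ((R ** cmat A ** R') *v y) \<le> - \<kappa> * (norm y)\<^sup>2"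
    by (rule similar_numerical_range_bound[OF eig])
  define \<Phi> where "\<Phi> W = R ** cmat W ** cnj_transpose R" for W :: "real^'n^'n"
  have "linear \<Phi>"
    by (rule linearI) (simp_all add: \<Phi>_def cmat_add cmat_scaleR matrix_add_ldistrib matrix_add_rdistrib
        matrix_scalar_ac scalar_matrix_assoc)
  moreover have "inj \<Phi>"
  proof (rule injI)
    have recover: "R' ** \<Phi> W ** cnj_transpose R' = cmat W" for W
    proof -
      have "R' ** \<Phi> W ** cnj_transpose R'
          = (R' ** R) ** cmat W ** (cnj_transpose R ** cnj_transpose R')"
        by (simp add: \<Phi>_def matrix_mul_assoc)
      then show ?thesis
        using RR' cnj_transpose_left_inverse[OF RR'] by (simp add: matrix_mul_lid matrix_mul_rid)
    qed
    fix W W'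
    assume "\<Phi> W = \<Phi> W'"
    then have "cmat W = cmat W'"
      by (metis recover)
    then show "W = W'"
      by (simp add: cmat_eq_iff)
  qed
  moreover have "\<Phi> W \<bullet> \<Phi> (lyapunov_op c A W) \<le> - (2 * \<kappa> - c) * (norm (\<Phi> W))\<^sup>2" for W
  proof -
    define C where "C = R ** cmat A ** R'"
    have "\<Phi> W \<bullet> \<Phi> (lyapunov_op c A W)
        = \<Phi> W \<bullet> (C ** \<Phi> W) + \<Phi> W \<bullet> (\<Phi> W ** cnj_transpose C) + c * (norm (\<Phi> W))\<^sup>2"
      unfolding \<Phi>_def lyapunov_op_conjugate[OF RR'] C_def
      by (simp add: inner_add_right power2_norm_eq_inner)
    also have "\<dots> \<le> - (2 * \<kappa> - c) * (norm (\<Phi> W))\<^sup>2"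
      using inner_mult_left_le[of C \<kappa> "\<Phi> W"] inner_mult_right_le[of C \<kappa> "\<Phi> W"] C[rule_format]
      unfolding C_def by (simp add: algebra_simps)
    finally show ?thesis .
  qed
  ultimately have "strictly_dissipative \<Phi> (2 * \<kappa> - c) (lyapunov_op c A)"
    using \<open>\<kappa> > c / 2\<close> unfolding strictly_dissipative_def by auto
  then show thesis
    by (rule that)
qed

lemma cnj_transpose_conjugate_transpose_mult:
  fixes A :: "real^'n^'n"
  assumes "R' ** R = Finite_Cartesian_Product.mat 1"
  shows "cnj_transpose R' *v cvec (transpose A *v y)
    = cnj_transpose (R ** cmat A ** R') *v (cnj_transpose R' *v cvec y)"
proof -
  have "cnj_transpose (R ** cmat A ** R') *v (cnj_transpose R' *v cvec y)
      = cnj_transpose R' ** cnj_transpose (cmat A) ** (cnj_transpose R ** cnj_transpose R') *v cvec y"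
    by (simp add: cnj_transpose_mult matrix_vector_mul_assoc matrix_mul_assoc)
  also have "\<dots> = cnj_transpose R' *v cvec (transpose A *v y)"
    unfolding cnj_transpose_left_inverse[OF assms]
    by (simp add: matrix_mul_rid cmat_mult_cvec flip: cmat_transpose matrix_vector_mul_assoc
        del: transpose_matrix_vector)
  finally show ?thesis ..
qed

lemma shifted_transpose_strictly_dissipative:
  fixes A :: "real^'n^'n"
  assumes eig: "\<And>\<mu>. is_eigenvalue A \<mu> \<Longrightarrow> Re \<mu> < - (c / 2)"
  obtains \<Psi> :: "real^'n \<Rightarrow> complex^'n" and r
  where "strictly_dissipative \<Psi> r (\<lambda>y. transpose A *v y + (c / 2) *\<^sub>R y)"
proof -
  obtain R R' :: "complex^'n^'n" and \<kappa> where "R ** R' = Finite_Cartesian_Product.mat 1"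
    and RR': "R' ** R = Finite_Cartesian_Product.mat 1" and "\<kappa> > c / 2"
    and C: "\<forall>y. y \<bullet> ((R ** cmat A ** R') *v y) \<le> - \<kappa> * (norm y)\<^sup>2"
    by (rule similar_numerical_range_bound[OF eig])
  define \<Psi> where "\<Psi> y = cnj_transpose R' *v cvec y" for y :: "real^'n"
  have "linear \<Psi>"
    by (rule linearI) (simp_all add: \<Psi>_def cvec_add cvec_scaleR matrix_vector_right_distrib
        matrix_vector_mult_scaleR_right)
  moreover have "inj \<Psi>"
  proof (rule injI)
    fix x y
    assume "\<Psi> x = \<Psi> y"
    then have "cnj_transpose R *v \<Psi> x = cnj_transpose R *v \<Psi> y"
      by simp
    then show "x = y"
      using cnj_transpose_left_inverse[OF RR'] by (simp add: \<Psi>_def matrix_vector_mul_assoc cvec_eq_iff)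
  qed
  moreover have "\<Psi> y \<bullet> \<Psi> (transpose A *v y + (c / 2) *\<^sub>R y) \<le> - (\<kappa> - c / 2) * (norm (\<Psi> y))\<^sup>2" for y
  proof -
    have "\<Psi> (transpose A *v y) = cnj_transpose (R ** cmat A ** R') *v \<Psi> y"
      unfolding \<Psi>_def by (rule cnj_transpose_conjugate_transpose_mult[OF RR'])
    then have "\<Psi> (transpose A *v y + (c / 2) *\<^sub>R y)
        = cnj_transpose (R ** cmat A ** R') *v \<Psi> y + (c / 2) *\<^sub>R \<Psi> y"
      using \<open>linear \<Psi>\<close> by (simp add: linear_add linear_scale del: transpose_matrix_vector)
    then have "\<Psi> y \<bullet> \<Psi> (transpose A *v y + (c / 2) *\<^sub>R y)
        = \<Psi> y \<bullet> ((R ** cmat A ** R') *v \<Psi> y) + c / 2 * (norm (\<Psi> y))\<^sup>2"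
      by (simp add: inner_add_right power2_norm_eq_inner inner_cnj_transpose_mult_vec
          del: transpose_matrix_vector)
    also have "\<dots> \<le> - (\<kappa> - c / 2) * (norm (\<Psi> y))\<^sup>2"
      using C[rule_format, of "\<Psi> y"] by (simp add: algebra_simps)
    finally show ?thesis .
  qed
  ultimately have "strictly_dissipative \<Psi> (\<kappa> - c / 2) (\<lambda>y. transpose A *v y + (c / 2) *\<^sub>R y)"
    using \<open>\<kappa> > c / 2\<close> unfolding strictly_dissipative_def by auto
  then show thesis
    by (rule that)
qed

section \<open>The Lyapunov equation and the recursion\<close>

lemma pos_def_coercive:
  fixes U :: "real^'n^'n"
  assumes "pos_def U"
  obtains \<mu> where "\<mu> > 0" "\<And>y. \<mu> * (norm y)\<^sup>2 \<le> y \<bullet> (U *v y)"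
proof -
  let ?q = "\<lambda>y::real^'n. y \<bullet> (U *v y)"
  have "sphere (0::real^'n) 1 \<noteq> {}"
    by simp
  moreover have "continuous_on (sphere 0 1) ?q"
    by (intro continuous_intros matrix_vector_mult_linear_continuous_on)
  ultimately obtain y0 where y0: "y0 \<in> sphere 0 1" and min: "\<And>y. y \<in> sphere 0 1 \<Longrightarrow> ?q y0 \<le> ?q y"
    using continuous_attains_inf[OF compact_sphere] by blast
  show thesis
  proof (rule that)
    have "y0 \<noteq> 0"
      using y0 by auto
    then show "?q y0 > 0"
      using assms unfolding pos_def_def by blast
    fix y :: "real^'n"
    show "?q y0 * (norm y)\<^sup>2 \<le> ?q y"
    proof (cases "y = 0")
      case False
      define u where "u = (1 / norm y) *\<^sub>R y"
      have "u \<in> sphere 0 1"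
        using False by (simp add: u_def norm_scaleR)
      moreover have "?q y = ?q u * (norm y)\<^sup>2"
        using False by (simp add: u_def matrix_vector_mult_scaleR power2_eq_square)
      ultimately show ?thesis
        using min by (simp add: mult_right_mono)
    qed simp
  qed
qed

lemma quadratic_form_euler_step:
  fixes A U V :: "real^'n^'n" and y :: "real^'n"
  assumes V_sym: "transpose V = V" and V: "U + lyapunov_op c A V = 0"
  defines "z \<equiv> transpose A *v y + (c / 2) *\<^sub>R y"
  shows "(y + t *\<^sub>R z) \<bullet> (V *v (y + t *\<^sub>R z)) = y \<bullet> (V *v y) - t * (y \<bullet> (U *v y)) + t\<^sup>2 * (z \<bullet> (V *v z))"
proof -
  have V_swap: "a \<bullet> (V *v b) = b \<bullet> (V *v a)" for a b
  proof -
    have "a \<bullet> (V *v b) = (transpose V *v a) \<bullet> b"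
      by (simp add: dot_lmul_matrix)
    then show ?thesis
      using V_sym by (simp add: inner_commute)
  qed
  have A_swap: "y \<bullet> (A *v (V *v y)) = y \<bullet> (V *v (transpose A *v y))"
  proof -
    have "y \<bullet> (A *v (V *v y)) = (transpose A *v y) \<bullet> (V *v y)"
      by (simp add: dot_lmul_matrix)
    then show ?thesis
      using V_swap by simp
  qed
  have "(U + lyapunov_op c A V) *v y = 0"
    using V by simp
  then have "y \<bullet> (U *v y) + y \<bullet> (lyapunov_op c A V *v y) = 0"
    by (metis inner_add_right inner_zero_right matrix_vector_mult_add_rdistrib)
  moreover have "y \<bullet> (lyapunov_op c A V *v y)
      = y \<bullet> (A *v (V *v y)) + y \<bullet> (V *v (transpose A *v y)) + c * (y \<bullet> (V *v y))"
    by (simp add: lyapunov_op_def matrix_vector_mult_add_rdistrib matrix_vector_mul_assoc[symmetric]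
        inner_add_right scaleR_matrix_vector_assoc[symmetric] del: transpose_matrix_vector)
  ultimately have U_form: "y \<bullet> (U *v y) = - 2 * (y \<bullet> (V *v z))"
    unfolding A_swap z_def
    by (simp add: matrix_vector_right_distrib matrix_vector_mult_scaleR inner_add_right
        del: transpose_matrix_vector)
  have "(y + t *\<^sub>R z) \<bullet> (V *v (y + t *\<^sub>R z))
      = y \<bullet> (V *v y) + t * (y \<bullet> (V *v z)) + t * (z \<bullet> (V *v y)) + t\<^sup>2 * (z \<bullet> (V *v z))"
    by (simp add: matrix_vector_right_distrib matrix_vector_mult_scaleR inner_add_left inner_add_right
        power2_eq_square algebra_simps del: transpose_matrix_vector)
  then show ?thesis
    using V_swap[of z y] U_form by (simp add: algebra_simps)
qed

lemma quadratic_form_linear_bound: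
  fixes V :: "real^'n^'n" and M :: "real^'n \<Rightarrow> real^'n"
  assumes "linear M"
  obtains K where "K \<ge> 0" "\<forall>x. M x \<bullet> (V *v M x) \<le> K * (norm x)\<^sup>2"
proof -
  obtain BM where "BM > 0" and BM: "\<And>x. norm (M x) \<le> BM * norm x"
    using linear_bounded_pos[OF assms] by blast
  obtain BV where "BV > 0" and BV: "\<And>x. norm (V *v x) \<le> BV * norm x"
    using linear_bounded_pos[OF matrix_vector_mul_linear[of V]] by blast
  show thesis
  proof (rule that)
    show "BV * BM\<^sup>2 \<ge> 0"
      using \<open>BV > 0\<close> by simp
    show "\<forall>x. M x \<bullet> (V *v M x) \<le> BV * BM\<^sup>2 * (norm x)\<^sup>2"
    proof
      fix x
      have "M x \<bullet> (V *v M x) \<le> norm (M x) * (BV * norm (M x))"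
        using BV[of "M x"] norm_cauchy_schwarz[of "M x" "V *v M x"]
        by (meson mult_left_mono norm_ge_zero order_trans)
      also have "\<dots> = BV * (norm (M x))\<^sup>2"
        by (simp add: power2_eq_square)
      also have "\<dots> \<le> BV * (BM * norm x)\<^sup>2"
        using \<open>BV > 0\<close> BM[of x] by (intro mult_left_mono power_mono) auto
      finally show "M x \<bullet> (V *v M x) \<le> BV * BM\<^sup>2 * (norm x)\<^sup>2"
        by (simp add: power_mult_distrib)
    qed
  qed
qed

lemma quadratic_form_euler_descent:
  fixes A U V :: "real^'n^'n"
  assumes U: "pos_def U" and V_sym: "transpose V = V" and V: "U + lyapunov_op c A V = 0"
  obtains t1 \<delta> where "t1 > 0" "\<delta> > 0" "\<And>t y. 0 < t \<Longrightarrow> t \<le> t1 \<Longrightarrow>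
    (y + t *\<^sub>R (transpose A *v y + (c / 2) *\<^sub>R y)) \<bullet> (V *v (y + t *\<^sub>R (transpose A *v y + (c / 2) *\<^sub>R y)))
      \<le> y \<bullet> (V *v y) - t * \<delta> * (norm y)\<^sup>2"
proof -
  let ?M = "\<lambda>y. transpose A *v y + (c / 2) *\<^sub>R y"
  have "linear ?M"
    by (rule linearI) (simp_all add: matrix_vector_right_distrib matrix_vector_mult_scaleR
        algebra_simps del: transpose_matrix_vector)
  obtain \<mu> where "\<mu> > 0" and \<mu>: "\<And>x. \<mu> * (norm x)\<^sup>2 \<le> x \<bullet> (U *v x)"
    using pos_def_coercive[OF U] by blast
  obtain K where "K \<ge> 0" and VM: "\<forall>x. ?M x \<bullet> (V *v ?M x) \<le> K * (norm x)\<^sup>2"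
    by (rule quadratic_form_linear_bound[where V = V, OF \<open>linear ?M\<close>])
  show thesis
  proof (rule that[of "\<mu> / (2 * K + 1)" "\<mu> / 2"])
    show "\<mu> / (2 * K + 1) > 0" "\<mu> / 2 > 0"
      using \<open>\<mu> > 0\<close> \<open>K \<ge> 0\<close> by auto
    fix t y
    assume t: "0 < t" "t \<le> \<mu> / (2 * K + 1)"
    have "t * K \<le> \<mu> / (2 * K + 1) * K"
      using \<open>K \<ge> 0\<close> t by (intro mult_right_mono) auto
    also have "\<dots> \<le> \<mu> / 2"
      using \<open>K \<ge> 0\<close> \<open>\<mu> > 0\<close> by (simp add: field_simps)
    finally have "t * K \<le> \<mu> / 2" .
    have "(y + t *\<^sub>R ?M y) \<bullet> (V *v (y + t *\<^sub>R ?M y))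
        = y \<bullet> (V *v y) - t * (y \<bullet> (U *v y)) + t\<^sup>2 * (?M y \<bullet> (V *v ?M y))"
      by (rule quadratic_form_euler_step[OF V_sym V])
    also have "\<dots> \<le> y \<bullet> (V *v y) - t * (\<mu> * (norm y)\<^sup>2) + t\<^sup>2 * (K * (norm y)\<^sup>2)"
      using \<mu>[of y] VM t by (intro add_mono diff_mono mult_left_mono) auto
    also have "\<dots> = y \<bullet> (V *v y) - t * (norm y)\<^sup>2 * (\<mu> - t * K)"
      by (simp add: power2_eq_square algebra_simps)
    also have "\<dots> \<le> y \<bullet> (V *v y) - t * (norm y)\<^sup>2 * (\<mu> / 2)"
      using \<open>t * K \<le> \<mu> / 2\<close> t by (intro diff_left_mono mult_left_mono) auto
    finally show "(y + t *\<^sub>R ?M y) \<bullet> (V *v (y + t *\<^sub>R ?M y)) \<le> y \<bullet> (V *v y) - t * (\<mu> / 2) * (norm y)\<^sup>2"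
      by (simp add: algebra_simps)
  qed
qed

lemma lyapunov_solution_pos_def:
  fixes A U V :: "real^'n^'n"
  assumes eig: "\<And>\<mu>. is_eigenvalue A \<mu> \<Longrightarrow> Re \<mu> < - (c / 2)"
    and U: "pos_def U" and V_sym: "transpose V = V" and V: "U + lyapunov_op c A V = 0"
  shows "pos_def V"
  unfolding pos_def_def
proof (intro conjI allI impI V_sym)
  fix y :: "real^'n"
  assume "y \<noteq> 0"
  define M where "M y = transpose A *v y + (c / 2) *\<^sub>R y" for y :: "real^'n"
  have "linear M"
    by (rule linearI) (simp_all add: M_def matrix_vector_right_distrib matrix_vector_mult_scaleR
        algebra_simps del: transpose_matrix_vector)
  obtain \<Psi> :: "real^'n \<Rightarrow> complex^'n" and r where diss: "strictly_dissipative \<Psi> r M"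
    unfolding M_def by (rule shifted_transpose_strictly_dissipative[OF eig])
  obtain t0 \<rho> where "t0 > 0" "\<rho> > 0" "\<rho> * t0 \<le> 1"
    and contr: "\<And>t x. 0 < t \<Longrightarrow> t \<le> t0 \<Longrightarrow> norm (\<Psi> (x + t *\<^sub>R M x)) \<le> (1 - \<rho> * t) * norm (\<Psi> x)"
    by (rule strictly_dissipative_euler_contraction[OF diss \<open>linear M\<close>]) blast
  obtain t1 \<delta> where "t1 > 0" "\<delta> > 0"
    and descent: "\<And>t x. 0 < t \<Longrightarrow> t \<le> t1 \<Longrightarrow> (x + t *\<^sub>R M x) \<bullet> (V *v (x + t *\<^sub>R M x))
      \<le> x \<bullet> (V *v x) - t * \<delta> * (norm x)\<^sup>2"
    unfolding M_def by (rule quadratic_form_euler_descent[OF U V_sym V]) blast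
  define t where "t = min t0 t1"
  have t: "0 < t" "t \<le> t0" "t \<le> t1"
    using \<open>t0 > 0\<close> \<open>t1 > 0\<close> by (auto simp: t_def)
  have "\<rho> * t \<le> 1"
    using mult_left_mono[OF \<open>t \<le> t0\<close>, of \<rho>] \<open>\<rho> > 0\<close> \<open>\<rho> * t0 \<le> 1\<close> by linarith
  define q where "q x = x \<bullet> (V *v x)" for x :: "real^'n"
  have "q y > q 0"
  proof (rule pos_if_decreasing_along_null_orbits[where F = "\<lambda>x. x + t *\<^sub>R M x"])
    show "isCont q 0"
      unfolding q_def by (intro continuous_intros linear_continuous_at matrix_vector_mul_linear)
    show "(\<lambda>k. ((\<lambda>x. x + t *\<^sub>R M x) ^^ k) x) \<longlonglongrightarrow> 0" for x
      using diss \<open>\<rho> > 0\<close> \<open>\<rho> * t \<le> 1\<close> t contr unfolding strictly_dissipative_def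
      by (intro contraction_iterates_tendsto_zero[where \<theta> = "1 - \<rho> * t" and \<Phi> = \<Psi>]) auto
    show "q (x + t *\<^sub>R M x) \<le> q x" for x
      using descent[OF t(1,3), of x] t \<open>\<delta> > 0\<close> unfolding q_def
      by (smt (verit) mult_nonneg_nonneg zero_le_power2)
    show "q (y + t *\<^sub>R M y) < q y"
      using descent[OF t(1,3), of y] t \<open>\<delta> > 0\<close> \<open>y \<noteq> 0\<close> unfolding q_def
      by (smt (verit) mult_pos_pos zero_less_power2 norm_eq_zero)
  qed
  then show "y \<bullet> (V *v y) > 0"
    by (simp add: q_def)
qed

lemma lyapunov_equation_solution:
  fixes A U :: "real^'n^'n"
  assumes diss: "strictly_dissipative \<Phi> r (lyapunov_op c A)" and U_sym: "transpose U = U"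
  obtains V where "U + lyapunov_op c A V = 0" "transpose V = V"
    "\<And>W. U + lyapunov_op c A W = 0 \<Longrightarrow> W = V"
proof -
  have inj: "inj (lyapunov_op c A)"
    by (rule strictly_dissipative_inj[OF diss linear_lyapunov_op])
  then have "surj (lyapunov_op c A)"
    by (rule linear_injective_imp_surjective[OF linear_lyapunov_op]) simp
  then obtain V where LV: "lyapunov_op c A V = - U"
    by (metis surjD)
  show thesis
  proof (rule that)
    show "U + lyapunov_op c A V = 0"
      using LV by simp
    have "lyapunov_op c A (transpose V) = lyapunov_op c A V"
      using LV U_sym by (simp add: lyapunov_op_transpose matrix_transpose_uminus)
    then show "transpose V = V"
      using inj by (simp add: inj_eq)
    fix W
    assume "U + lyapunov_op c A W = 0"
    then have "lyapunov_op c A W = lyapunov_op c A V"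
      using LV by (simp add: add_eq_0_iff)
    then show "W = V"
      using inj by (simp add: inj_eq)
  qed
qed

lemma lyapunov_recursion_error_bound:
  fixes A U V v v' :: "real^'n^'n"
  assumes V: "U + lyapunov_op c A V = 0" and B: "\<And>W. norm (A ** W ** transpose A) \<le> B * norm W"
    and "\<gamma> > 0" "\<gamma>' \<ge> 0" "B \<ge> 0"
    and v': "v' = v + \<gamma> *\<^sub>R (U + lyapunov_op c A v) + a *\<^sub>R v + d *\<^sub>R U + (\<gamma> * \<gamma>') *\<^sub>R (A ** v ** transpose A)"
  defines "\<eta> \<equiv> \<bar>a / \<gamma>\<bar> + \<gamma>' * B"
  shows "norm ((v' - V) - ((v - V) + \<gamma> *\<^sub>R lyapunov_op c A (v - V)))
    \<le> \<gamma> * (\<eta> * norm (v - V) + (\<eta> * norm V + \<bar>d / \<gamma>\<bar> * norm U))"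
proof -
  have "lyapunov_op c A (v - V) = lyapunov_op c A v - lyapunov_op c A V"
    by (rule linear_diff[OF linear_lyapunov_op])
  then have "U + lyapunov_op c A v = lyapunov_op c A (v - V)"
    using V by (simp add: add_eq_0_iff)
  then have "(v' - V) - ((v - V) + \<gamma> *\<^sub>R lyapunov_op c A (v - V))
      = a *\<^sub>R v + d *\<^sub>R U + (\<gamma> * \<gamma>') *\<^sub>R (A ** v ** transpose A)"
    using v' by (simp add: algebra_simps)
  also have "norm \<dots> \<le> \<bar>a\<bar> * norm v + \<bar>d\<bar> * norm U + \<gamma> * \<gamma>' * (B * norm v)"
    using \<open>\<gamma> > 0\<close> \<open>\<gamma>' \<ge> 0\<close> B[of v]
    by (intro norm_triangle_le add_mono) (auto simp: abs_mult intro: mult_left_mono)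
  also have "\<dots> = \<gamma> * (\<eta> * norm v + \<bar>d / \<gamma>\<bar> * norm U)"
    using \<open>\<gamma> > 0\<close> by (simp add: \<eta>_def abs_div field_simps)
  also have "\<dots> \<le> \<gamma> * (\<eta> * norm (v - V) + (\<eta> * norm V + \<bar>d / \<gamma>\<bar> * norm U))"
  proof -
    have "\<eta> \<ge> 0"
      using \<open>\<gamma>' \<ge> 0\<close> \<open>B \<ge> 0\<close> by (simp add: \<eta>_def)
    then have "\<eta> * norm v \<le> \<eta> * (norm (v - V) + norm V)"
      by (intro mult_left_mono) (metis norm_triangle_sub add.commute)
    then show ?thesis
      using \<open>\<gamma> > 0\<close> by (intro mult_left_mono) (auto simp: algebra_simps)
  qed
  finally show ?thesis .
qed

lemma lyapunov_recursion_tendsto: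
  fixes A U V :: "real^'n^'n" and \<Phi> :: "real^'n^'n \<Rightarrow> 'b::euclidean_space"
    and v :: "nat \<Rightarrow> real^'n^'n" and \<gamma> a d :: "nat \<Rightarrow> real"
  assumes diss: "strictly_dissipative \<Phi> r (lyapunov_op c A)" and V: "U + lyapunov_op c A V = 0"
    and \<gamma>_pos: "\<And>n. n \<ge> 1 \<Longrightarrow> \<gamma> n > 0" and \<gamma>_div: "\<not> summable \<gamma>" and \<gamma>_lim: "\<gamma> \<longlonglongrightarrow> 0"
    and a_lim: "(\<lambda>n. a n / \<gamma> n) \<longlonglongrightarrow> 0" and d_lim: "(\<lambda>n. d n / \<gamma> n) \<longlonglongrightarrow> 0"
    and rec: "\<And>n. n \<ge> 1 \<Longrightarrow> v (Suc n) = v n + \<gamma> n *\<^sub>R (U + lyapunov_op c A (v n))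
                 + a n *\<^sub>R v n + d n *\<^sub>R U + (\<gamma> n * \<gamma> (Suc n)) *\<^sub>R (A ** v n ** transpose A)"
  shows "v \<longlonglongrightarrow> V"
proof -
  have "linear (\<lambda>W. A ** W ** transpose A)"
    by (rule linearI) (simp_all add: matrix_add_ldistrib matrix_add_rdistrib matrix_scalar_ac scalar_matrix_assoc)
  then obtain B where "B > 0" and B: "\<And>W. norm (A ** W ** transpose A) \<le> B * norm W"
    using linear_bounded_pos by blast
  define \<eta> where "\<eta> n = \<bar>a n / \<gamma> n\<bar> + \<gamma> (Suc n) * B" for n
  define s where "s n = \<eta> n * norm V + \<bar>d n / \<gamma> n\<bar> * norm U" for n
  have \<eta>_lim: "\<eta> \<longlonglongrightarrow> 0"
    unfolding \<eta>_def
    using tendsto_add[OF tendsto_rabs_zero[OF a_lim] tendsto_mult_left_zero[OF LIMSEQ_Suc[OF \<gamma>_lim]]]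
    by simp
  have s_lim: "s \<longlonglongrightarrow> 0"
    unfolding s_def
    using tendsto_add[OF tendsto_mult_left_zero[OF \<eta>_lim] tendsto_mult_left_zero[OF tendsto_rabs_zero[OF d_lim]]]
    by simp
  have "(\<lambda>n. v n - V) \<longlonglongrightarrow> 0"
  proof (rule strictly_dissipative_perturbed_euler_tendsto_zero[OF diss linear_lyapunov_op \<gamma>_div \<gamma>_lim \<eta>_lim s_lim])
    have "\<gamma> n > 0 \<and> \<eta> n \<ge> 0 \<and> norm ((v (Suc n) - V) - ((v n - V) + \<gamma> n *\<^sub>R lyapunov_op c A (v n - V)))
        \<le> \<gamma> n * (\<eta> n * norm (v n - V) + s n)" if "n \<ge> 1" for n
    proof -
      have "\<gamma> n > 0" "\<gamma> (Suc n) \<ge> 0"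
        using \<gamma>_pos that by (auto simp: less_imp_le)
      with lyapunov_recursion_error_bound[OF V B _ _ _ rec[OF that]] \<open>B > 0\<close> show ?thesis
        unfolding \<eta>_def s_def by auto
    qed
    then show "eventually (\<lambda>n. \<gamma> n > 0 \<and> \<eta> n \<ge> 0 \<and>
        norm ((v (Suc n) - V) - ((v n - V) + \<gamma> n *\<^sub>R lyapunov_op c A (v n - V)))
          \<le> \<gamma> n * (\<eta> n * norm (v n - V) + s n)) sequentially"
      by (intro eventually_sequentiallyI[of 1])
  qed
  then show ?thesis
    by (rule LIM_zero_cancel)
qed

lemma lyapunov_recursion_limit:
  fixes A U :: "real^'n^'n" and v :: "nat \<Rightarrow> real^'n^'n" and \<gamma> a d :: "nat \<Rightarrow> real"
  assumes eig: "\<And>\<mu>. is_eigenvalue A \<mu> \<Longrightarrow> Re \<mu> < - (c / 2)" and U: "pos_def U"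
    and \<gamma>_pos: "\<And>n. n \<ge> 1 \<Longrightarrow> \<gamma> n > 0" and \<gamma>_div: "\<not> summable \<gamma>" and \<gamma>_lim: "\<gamma> \<longlonglongrightarrow> 0"
    and a_lim: "(\<lambda>n. a n / \<gamma> n) \<longlonglongrightarrow> 0" and d_lim: "(\<lambda>n. d n / \<gamma> n) \<longlonglongrightarrow> 0"
    and rec: "\<And>n. n \<ge> 1 \<Longrightarrow> v (Suc n) = v n + \<gamma> n *\<^sub>R (U + lyapunov_op c A (v n))
                 + a n *\<^sub>R v n + d n *\<^sub>R U + (\<gamma> n * \<gamma> (Suc n)) *\<^sub>R (A ** v n ** transpose A)"
  shows "\<exists>V. pos_def V \<and> U + lyapunov_op c A V = 0
           \<and> (\<forall>W. pos_def W \<and> U + lyapunov_op c A W = 0 \<longrightarrow> W = V) \<and> v \<longlonglongrightarrow> V"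
proof -
  obtain \<Phi> :: "real^'n^'n \<Rightarrow> complex^'n^'n" and r where diss: "strictly_dissipative \<Phi> r (lyapunov_op c A)"
    by (rule lyapunov_op_strictly_dissipative[OF eig])
  obtain V where V: "U + lyapunov_op c A V = 0" and V_sym: "transpose V = V"
    and unique: "\<And>W. U + lyapunov_op c A W = 0 \<Longrightarrow> W = V"
    using lyapunov_equation_solution[OF diss] U unfolding pos_def_def by blast
  have "pos_def V"
    by (rule lyapunov_solution_pos_def[OF eig U V_sym V])
  moreover have "v \<longlonglongrightarrow> V"
    by (rule lyapunov_recursion_tendsto[OF diss V \<gamma>_pos \<gamma>_div \<gamma>_lim a_lim d_lim rec])
  ultimately show ?thesis
    using V unique by blast
qed

section \<open>Step sizes\<close>

lemma tendsto_zero_if_summable_power2: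
  fixes \<gamma> :: "nat \<Rightarrow> real"
  assumes "summable (\<lambda>k. (\<gamma> (k + 1))\<^sup>2)"
  shows "\<gamma> \<longlonglongrightarrow> 0"
proof -
  have "(\<lambda>k. (\<gamma> (Suc k))\<^sup>2) \<longlonglongrightarrow> 0"
    using summable_LIMSEQ_zero[OF assms] by simp
  then have "(\<lambda>k. \<bar>\<gamma> (Suc k)\<bar>) \<longlonglongrightarrow> 0"
    using tendsto_real_sqrt by fastforce
  then show ?thesis
    by (simp add: tendsto_rabs_zero_iff filterlim_sequentially_Suc)
qed

lemma abs_exp_minus_one_le:
  fixes x :: real
  assumes "\<bar>x\<bar> \<le> 1"
  shows "\<bar>exp x - 1\<bar> \<le> 2 * \<bar>x\<bar>"
proof (cases "x \<ge> 0")
  case True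
  have "x\<^sup>2 \<le> x"
    using True assms mult_left_le[of x x] by (simp add: power2_eq_square)
  then show ?thesis
    using True exp_bound[OF True] assms by simp
next
  case False
  then have "\<bar>exp x - 1\<bar> = 1 - exp x"
    by simp
  then show ?thesis
    using False exp_ge_add_one_self[of x] by linarith
qed

lemma tendsto_zero_if_smallo:
  fixes f g :: "nat \<Rightarrow> real"
  assumes "f \<in> o(g)" and "g \<longlonglongrightarrow> 0"
  shows "f \<longlonglongrightarrow> 0"
proof (rule Lim_null_comparison)
  show "eventually (\<lambda>k. norm (f k) \<le> 1 * norm (g k)) sequentially"
    using landau_o.smallD[OF assms(1), of 1] by simp
  show "(\<lambda>k. 1 * norm (g k)) \<longlonglongrightarrow> 0"
    using tendsto_norm_zero[OF assms(2)] by simp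
qed

lemma relative_step_change_tendsto_zero:
  fixes \<gamma> :: "nat \<Rightarrow> real"
  assumes \<gamma>_pos: "\<And>n. n \<ge> 1 \<Longrightarrow> \<gamma> n > 0" and l_lim: "(\<lambda>k. ln (\<gamma> (k - 1) / \<gamma> k)) \<longlonglongrightarrow> 0"
  shows "(\<lambda>n. (\<gamma> (Suc n) - \<gamma> n) / \<gamma> n) \<longlonglongrightarrow> 0"
proof -
  define l where "l k = ln (\<gamma> (k - 1) / \<gamma> k)" for k
  have "(\<lambda>n. exp (- l (Suc n)) - 1) \<longlonglongrightarrow> exp (- 0) - 1"
    using LIMSEQ_Suc[OF l_lim] unfolding l_def by (intro tendsto_intros)
  moreover have "exp (- l (Suc n)) - 1 = (\<gamma> (Suc n) - \<gamma> n) / \<gamma> n" if "n \<ge> 1" for n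
  proof -
    have "\<gamma> n > 0" "\<gamma> (Suc n) > 0"
      using \<gamma>_pos that by auto
    then show ?thesis
      by (simp add: l_def exp_minus diff_divide_distrib)
  qed
  then have "eventually (\<lambda>n. exp (- l (Suc n)) - 1 = (\<gamma> (Suc n) - \<gamma> n) / \<gamma> n) sequentially"
    by (intro eventually_sequentiallyI[of 1])
  ultimately show ?thesis
    by (simp add: tendsto_cong)
qed

lemma relative_step_change_over_step_tendsto_zero:
  fixes \<gamma> :: "nat \<Rightarrow> real"
  assumes \<gamma>_pos: "\<And>n. n \<ge> 1 \<Longrightarrow> \<gamma> n > 0" and \<gamma>_lim: "\<gamma> \<longlonglongrightarrow> 0"
    and l_small: "(\<lambda>k. ln (\<gamma> (k - 1) / \<gamma> k)) \<in> o(\<gamma>)"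
  shows "(\<lambda>n. ((\<gamma> n - \<gamma> (Suc n)) / \<gamma> (Suc n)) / \<gamma> n) \<longlonglongrightarrow> 0"
proof -
  define l where "l k = ln (\<gamma> (k - 1) / \<gamma> k)" for k
  have l_lim: "l \<longlonglongrightarrow> 0"
    unfolding l_def by (rule tendsto_zero_if_smallo[OF l_small \<gamma>_lim])
  have "(\<lambda>n. l (Suc n) / \<gamma> (Suc n)) \<longlonglongrightarrow> 0"
    using LIMSEQ_Suc[OF smalloD_tendsto[OF l_small]] unfolding l_def .
  then have "(\<lambda>n. \<bar>l (Suc n) / \<gamma> (Suc n)\<bar>) \<longlonglongrightarrow> 0"
    by (rule tendsto_rabs_zero)
  then have bound_lim: "(\<lambda>n. 2 * \<bar>l (Suc n) / \<gamma> (Suc n)\<bar> * exp (- l (Suc n))) \<longlonglongrightarrow> 2 * 0 * exp (- 0)"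
    by (intro tendsto_mult tendsto_const tendsto_exp tendsto_minus LIMSEQ_Suc[OF l_lim])
  show ?thesis
  proof (rule Lim_null_comparison)
    show "(\<lambda>n. 2 * \<bar>l (Suc n) / \<gamma> (Suc n)\<bar> * exp (- l (Suc n))) \<longlonglongrightarrow> 0"
      using bound_lim by simp
    have "eventually (\<lambda>n. \<bar>l (Suc n)\<bar> < 1) sequentially"
      using order_tendstoD(2)[OF tendsto_rabs_zero[OF LIMSEQ_Suc[OF l_lim]], of 1] by simp
    then show "eventually (\<lambda>n. norm (((\<gamma> n - \<gamma> (Suc n)) / \<gamma> (Suc n)) / \<gamma> n)
        \<le> 2 * \<bar>l (Suc n) / \<gamma> (Suc n)\<bar> * exp (- l (Suc n))) sequentially"
      using eventually_ge_at_top[of 1]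
    proof eventually_elim
      case (elim n)
      then have \<gamma>: "\<gamma> n > 0" "\<gamma> (Suc n) > 0"
        using \<gamma>_pos by auto
      have "(\<gamma> n - \<gamma> (Suc n)) / \<gamma> (Suc n) = exp (l (Suc n)) - 1"
        using \<gamma> by (simp add: l_def diff_divide_distrib)
      then have "norm (((\<gamma> n - \<gamma> (Suc n)) / \<gamma> (Suc n)) / \<gamma> n) \<le> 2 * \<bar>l (Suc n)\<bar> / \<gamma> n"
        using abs_exp_minus_one_le[of "l (Suc n)"] elim \<gamma>
        by (simp add: divide_right_mono)
      also have "\<dots> = 2 * \<bar>l (Suc n) / \<gamma> (Suc n)\<bar> * exp (- l (Suc n))"
        using \<gamma> by (simp add: l_def exp_minus abs_div field_simps)
      finally show ?case .
    qed
  qed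
qed

lemma lyapunov_op_zero: "lyapunov_op 0 A W = A ** W + W ** transpose A"
  by (simp add: lyapunov_op_def)

lemma lyapunov_recursion_limit_small_log_ratio:
  fixes A U :: "real^'n^'n" and \<gamma> :: "nat \<Rightarrow> real" and v :: "nat \<Rightarrow> real^'n^'n"
  assumes "hurwitz A" and U: "pos_def U" and \<gamma>_pos: "\<forall>n\<ge>1. \<gamma> n > 0"
    and \<gamma>_div: "\<not> summable (\<lambda>k. \<gamma> (k + 1))" and \<gamma>_sq: "summable (\<lambda>k. (\<gamma> (k + 1))\<^sup>2)"
    and l_small: "(\<lambda>k. ln (\<gamma> (k - 1) / \<gamma> k)) \<in> o(\<gamma>)"
    and rec: "\<forall>n\<ge>1. v (n + 1) = v n + \<gamma> n *\<^sub>R (U + A ** v n + v n ** transpose A)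
                + ((\<gamma> n - \<gamma> (n + 1)) / \<gamma> (n + 1)) *\<^sub>R v n + (\<gamma> (n + 1) - \<gamma> n) *\<^sub>R U
                + (\<gamma> n * \<gamma> (n + 1)) *\<^sub>R (A ** v n ** transpose A)"
  shows "\<exists>V. pos_def V \<and> U + A ** V + V ** transpose A = 0
           \<and> (\<forall>W. pos_def W \<and> U + A ** W + W ** transpose A = 0 \<longrightarrow> W = V) \<and> v \<longlonglongrightarrow> V"
proof -
  have \<gamma>_lim: "\<gamma> \<longlonglongrightarrow> 0"
    by (rule tendsto_zero_if_summable_power2[OF \<gamma>_sq])
  have "(\<lambda>n. (\<gamma> (Suc n) - \<gamma> n) / \<gamma> n) \<longlonglongrightarrow> 0"
    using \<gamma>_pos tendsto_zero_if_smallo[OF l_small \<gamma>_lim] by (intro relative_step_change_tendsto_zero) auto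
  moreover have "(\<lambda>n. ((\<gamma> n - \<gamma> (Suc n)) / \<gamma> (Suc n)) / \<gamma> n) \<longlonglongrightarrow> 0"
    using \<gamma>_pos by (intro relative_step_change_over_step_tendsto_zero[OF _ \<gamma>_lim l_small]) auto
  moreover have "\<And>\<mu>. is_eigenvalue A \<mu> \<Longrightarrow> Re \<mu> < - (0 / 2)"
    using \<open>hurwitz A\<close> unfolding hurwitz_def by simp
  moreover have "\<not> summable \<gamma>"
    using \<gamma>_div summable_iff_shift[of \<gamma> 1] by simp
  ultimately have "\<exists>V. pos_def V \<and> U + lyapunov_op 0 A V = 0
      \<and> (\<forall>W. pos_def W \<and> U + lyapunov_op 0 A W = 0 \<longrightarrow> W = V) \<and> v \<longlonglongrightarrow> V"
    using U \<gamma>_pos \<gamma>_lim rec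
    by (intro lyapunov_recursion_limit[where a = "\<lambda>n. (\<gamma> n - \<gamma> (Suc n)) / \<gamma> (Suc n)"
          and d = "\<lambda>n. \<gamma> (Suc n) - \<gamma> n"]) (simp_all add: lyapunov_op_zero add.assoc)
  then show ?thesis
    by (simp add: lyapunov_op_zero add.assoc)
qed

text \<open>The asymptotic equivalence only enters through \<open>ln (\<gamma> (k - 1) / \<gamma> k) \<longlonglongrightarrow> 0\<close>; the drift
  \<open>v / \<gamma>s\<close> is part of the Lyapunov operator with \<open>c = 1 / \<gamma>s\<close>.\<close>

lemma lyapunov_recursion_limit_log_ratio_equiv_step:
  fixes A U :: "real^'n^'n" and \<gamma> :: "nat \<Rightarrow> real" and v :: "nat \<Rightarrow> real^'n^'n"
  assumes eig: "\<forall>\<mu>. is_eigenvalue A \<mu> \<longrightarrow> Re \<mu> \<le> - L" and "L > 0" and U: "pos_def U"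
    and \<gamma>_pos: "\<forall>n\<ge>1. \<gamma> n > 0" and \<gamma>_div: "\<not> summable (\<lambda>k. \<gamma> (k + 1))"
    and \<gamma>_sq: "summable (\<lambda>k. (\<gamma> (k + 1))\<^sup>2)"
    and \<gamma>s: "\<gamma>s > 1 / (2 * L)" and l_equiv: "(\<lambda>k. ln (\<gamma> (k - 1) / \<gamma> k)) \<sim>[at_top] (\<lambda>k. \<gamma> k / \<gamma>s)"
    and rec: "\<forall>n\<ge>1. v (n + 1) = v n + \<gamma> n *\<^sub>R (U + A ** v n + v n ** transpose A + (1 / \<gamma>s) *\<^sub>R v n)
                + (\<gamma> (n + 1) - \<gamma> n) *\<^sub>R U + (\<gamma> n * \<gamma> (n + 1)) *\<^sub>R (A ** v n ** transpose A)"
  shows "\<exists>V. pos_def V \<and> U + A ** V + V ** transpose A + (1 / \<gamma>s) *\<^sub>R V = 0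
           \<and> (\<forall>W. pos_def W \<and> U + A ** W + W ** transpose A + (1 / \<gamma>s) *\<^sub>R W = 0 \<longrightarrow> W = V)
           \<and> v \<longlonglongrightarrow> V"
proof -
  have \<gamma>_lim: "\<gamma> \<longlonglongrightarrow> 0"
    by (rule tendsto_zero_if_summable_power2[OF \<gamma>_sq])
  have "(\<lambda>k. ln (\<gamma> (k - 1) / \<gamma> k)) \<longlonglongrightarrow> 0"
    using asymp_equiv_tendsto_transfer[OF asymp_equiv_symI[OF l_equiv] tendsto_divide_zero[OF \<gamma>_lim]] .
  then have "(\<lambda>n. (\<gamma> (Suc n) - \<gamma> n) / \<gamma> n) \<longlonglongrightarrow> 0"
    using \<gamma>_pos by (intro relative_step_change_tendsto_zero) auto
  moreover have "\<And>\<mu>. is_eigenvalue A \<mu> \<Longrightarrow> Re \<mu> < - (1 / \<gamma>s / 2)"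
  proof -
    have "\<gamma>s > 0"
      using \<gamma>s \<open>L > 0\<close> by (smt (verit) divide_pos_pos)
    then have "1 / \<gamma>s / 2 < L"
      using \<gamma>s \<open>L > 0\<close> by (simp add: field_simps)
    then show "\<And>\<mu>. is_eigenvalue A \<mu> \<Longrightarrow> Re \<mu> < - (1 / \<gamma>s / 2)"
      using eig by force
  qed
  moreover have "\<not> summable \<gamma>"
    using \<gamma>_div summable_iff_shift[of \<gamma> 1] by simp
  ultimately have "\<exists>V. pos_def V \<and> U + lyapunov_op (1 / \<gamma>s) A V = 0
      \<and> (\<forall>W. pos_def W \<and> U + lyapunov_op (1 / \<gamma>s) A W = 0 \<longrightarrow> W = V) \<and> v \<longlonglongrightarrow> V"
    using U \<gamma>_pos \<gamma>_lim rec
    by (intro lyapunov_recursion_limit[where a = "\<lambda>n. 0" and d = "\<lambda>n. \<gamma> (Suc n) - \<gamma> n"])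
      (simp_all add: lyapunov_op_def add.assoc)
  then show ?thesis
    by (simp add: lyapunov_op_def add.assoc)
qed

theorem lemma8:
  fixes \<Theta> :: "(real^'d) set" and h :: "real^'d \<Rightarrow> real^'d" and \<theta>s :: "real^'d"
    and J :: "real^'d \<Rightarrow> real^'d^'d" and L :: real and Us :: "real^'d^'d"
    and \<gamma> :: "nat \<Rightarrow> real" and v :: "nat \<Rightarrow> real^'d^'d"
  assumes meas: "h \<in> borel_measurable (restrict_space borel \<Theta>)"
    and theta_in: "\<theta>s \<in> \<Theta>"
    and C2: "\<exists>U. open U \<and> \<theta>s \<in> U \<and> U \<subseteq> \<Theta> \<and> C2_with_jacobian U h J"
    and hurw: "hurwitz (J \<theta>s)"
    and Lpos: "L > 0"
    and Lmax: "(\<exists>\<mu>. is_eigenvalue (J \<theta>s) \<mu> \<and> Re \<mu> = - L) \<and>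
               (\<forall>\<mu>. is_eigenvalue (J \<theta>s) \<mu> \<longrightarrow> Re \<mu> \<le> - L)"
    and Us_pd: "pos_def Us"
    and gpos: "\<forall>n\<ge>1. \<gamma> n > 0"
    and gdiv: "\<not> summable (\<lambda>k. \<gamma> (k + 1))"
    and gsq: "summable (\<lambda>k. (\<gamma> (k + 1))\<^sup>2)"
  shows
   "(let A = J \<theta>s; f = (\<lambda>w. Us + A ** w + w ** transpose A) in
      ((\<lambda>k. ln (\<gamma> (k - 1) / \<gamma> k)) \<in> o(\<gamma>) \<and>
       (\<forall>n\<ge>1. v (n + 1) = v n + \<gamma> n *\<^sub>R f (v n)
                + ((\<gamma> n - \<gamma> (n + 1)) / \<gamma> (n + 1)) *\<^sub>R v n
                + (\<gamma> (n + 1) - \<gamma> n) *\<^sub>R Us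
                + (\<gamma> n * \<gamma> (n + 1)) *\<^sub>R (A ** v n ** transpose A))
       \<longrightarrow> (\<exists>V. pos_def V \<and> f V = 0 \<and> (\<forall>W. pos_def W \<and> f W = 0 \<longrightarrow> W = V)
              \<and> (\<lambda>n. v n) \<longlonglongrightarrow> V)))
    \<and>
    (\<forall>\<gamma>s::real. let A = J \<theta>s; f = (\<lambda>w. Us + A ** w + w ** transpose A + (1 / \<gamma>s) *\<^sub>R w) in
      (\<gamma>s > 1 / (2 * L) \<and>
       (\<lambda>k. ln (\<gamma> (k - 1) / \<gamma> k)) \<sim>[at_top] (\<lambda>k. \<gamma> k / \<gamma>s) \<and>
       (\<forall>n\<ge>1. v (n + 1) = v n + \<gamma> n *\<^sub>R f (v n)
                + (\<gamma> (n + 1) - \<gamma> n) *\<^sub>R Us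
                + (\<gamma> n * \<gamma> (n + 1)) *\<^sub>R (A ** v n ** transpose A))
       \<longrightarrow> (\<exists>V. pos_def V \<and> f V = 0 \<and> (\<forall>W. pos_def W \<and> f W = 0 \<longrightarrow> W = V)
              \<and> (\<lambda>n. v n) \<longlonglongrightarrow> V)))"
  unfolding Let_def
  using lyapunov_recursion_limit_small_log_ratio[OF hurw Us_pd gpos gdiv gsq]
    lyapunov_recursion_limit_log_ratio_equiv_step[OF conjunct2[OF Lmax] Lpos Us_pd gpos gdiv gsq]
  by blast

end
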